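(* Let $r=a/b$ with $a,b$ coprime positive integers. Then the X-ray transform $I_r$ (extended to a bounded operator on $L^2(\overline{\mathbb{H}})$) preserves the orthogonal decomposition $L^2(\overline{\mathbb{H}})= L^2(\mathbb{C})\oplus {}^0L^2(\overline{\mathbb{H}})$, i.e. $I_r$ maps $L^2(\mathbb{C})$ into $L^2(\mathbb{C})$ and ${}^0L^2(\overline{\mathbb{H}})$ into ${}^0L^2(\overline{\mathbb{H}})$.
   Context: The Heisenberg group is $\mathbb{H}=\mathbb{C}\times\mathbb{R}$ with product $(x+iy,t)(u+iv,s)=(x+u+i(y+v),\,t+s+\tfrac12(xv-yu))$. The reduced Heisenberg group is $\overline{\mathbb{H}}=\mathbb{H}/\Gamma$, $\Gamma=\{(0,k\pi):k\in\mathbb{Z}\}$, identified with $\mathbb{C}\times(\mathbb{R}/\pi\mathbb{Z})$ and equipped with Lebesgue measure. For $r=a/b$ ($a,b$ coprime positive integers) let $\gamma_r(s)=(\sqrt r e^{is/\sqrt r},\tfrac12\sqrt r s)\in\overline{\mathbb{H}}$ and define, for $f\in C_c^\infty(\overline{\mathbb{H}})$, $I_rf(z,t)=\int_0^{2\pi\sqrt{ab}}f((z,t)\gamma_r(s))\,ds$; this extends to a bounded operator on $L^2(\overline{\mathbb{H}})$. Here $L^2(\mathbb{C})$ is identified with $\{f\in L^2(\overline{\mathbb{H}}): f(z,t)=f(z,0)\ \forall (z,t)\}$ and ${}^0L^2(\overline{\mathbb{H}})=\{f\in L^2(\overline{\mathbb{H}}):\int_0^\pi f(z,t)\,dt=0\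 \forall z\in\mathbb{C}\}$. *)

theory Defs
  imports "HOL-Analysis.Analysis"
begin

text \<open>Functions on the reduced Heisenberg group are represented by functions on
  complex \<times> real that are periodic with period pi in the second variable.\<close>

type_synonym hpt = "complex \<times> real"

definition hmul :: "hpt \<Rightarrow> hpt \<Rightarrow> hpt" where
  "hmul p q = (fst p + fst q,
     snd p + snd q + (1/2) * (Re (fst p) * Im (fst q) - Im (fst p) * Re (fst q)))"

definition gamma_r :: "real \<Rightarrow> real \<Rightarrow> hpt" where
  "gamma_r r s = (complex_of_real (sqrt r) * exp (\<i> * complex_of_real (s / sqrt r)),
                  (1/2) * sqrt r * s)"

definition xray :: "nat \<Rightarrow> nat \<Rightarrow> (hpt \<Rightarrow> complex) \<Rightarrow> hpt \<Rightarrow> complex" where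
  "xray a b f p =
     (LINT s:{0..2 * pi * sqrt (real a * real b)}|lborel.
        f (hmul p (gamma_r (real a / real b) s)))"

definition pi_periodic :: "(hpt \<Rightarrow> 'b) \<Rightarrow> bool" where
  "pi_periodic f \<longleftrightarrow> (\<forall>z t. f (z, t + pi) = f (z, t))"

definition fdom :: "hpt set" where
  "fdom = UNIV \<times> {0..<pi}"

coinductive smooth_fun :: "('a::real_normed_vector \<Rightarrow> 'b::real_normed_vector) \<Rightarrow> bool" where
  "(\<forall>x. f differentiable (at x)) \<Longrightarrow>
   (\<forall>v. smooth_fun (\<lambda>x. frechet_derivative f (at x) v)) \<Longrightarrow> smooth_fun f"

definition Cc_inf :: "(hpt \<Rightarrow> complex) set" where
  "Cc_inf = {f. smooth_fun f \<and> pi_periodic f \<and>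
                (\<exists>R. \<forall>z t. R < cmod z \<longrightarrow> f (z, t) = 0)}"

definition L2H :: "(hpt \<Rightarrow> complex) set" where
  "L2H = {f. f \<in> borel_measurable borel \<and> pi_periodic f \<and>
             set_integrable lborel fdom (\<lambda>p. (cmod (f p))\<^sup>2)}"

definition L2norm :: "(hpt \<Rightarrow> complex) \<Rightarrow> real" where
  "L2norm f = sqrt (LINT p:fdom|lborel. (cmod (f p))\<^sup>2)"

definition ae_eq :: "(hpt \<Rightarrow> complex) \<Rightarrow> (hpt \<Rightarrow> complex) \<Rightarrow> bool" where
  "ae_eq f g \<longleftrightarrow> (AE p in lborel. p \<in> fdom \<longrightarrow> f p = g p)"

text \<open>L^2(C): classes having a representative independent of t.\<close>
definition L2C :: "(hpt \<Rightarrow> complex) set" where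
  "L2C = {f \<in> L2H. \<exists>h::complex \<Rightarrow> complex. ae_eq f (\<lambda>p. h (fst p))}"

text \<open>^0L^2: fibre integrals over t in [0,pi] vanish (for almost every z).\<close>
definition L2zero :: "(hpt \<Rightarrow> complex) set" where
  "L2zero = {f \<in> L2H. AE z in lborel. (LINT t:{0..pi}|lborel. f (z, t)) = 0}"

definition bounded_ext_xray :: "nat \<Rightarrow> nat \<Rightarrow> ((hpt \<Rightarrow> complex) \<Rightarrow> (hpt \<Rightarrow> complex)) \<Rightarrow> bool" where
  "bounded_ext_xray a b T \<longleftrightarrow>
     (\<forall>f\<in>L2H. T f \<in> L2H) \<and>
     (\<forall>f\<in>L2H. \<forall>g\<in>L2H. \<forall>c::complex. ae_eq (T (\<lambda>p. f p + c * g p)) (\<lambda>p. T f p + c * T g p)) \<and>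
     (\<exists>C. \<forall>f\<in>L2H. L2norm (T f) \<le> C * L2norm f) \<and>
     (\<forall>f\<in>Cc_inf. ae_eq (T f) (xray a b f))"

end

(*
  Let P f (z, t) = (1/pi) * integral of f (z, s) over s in [0, pi] be the average over the
  central fibres. By Cauchy-Schwarz P is a contraction in L^2, and L^2(C) and ^0L^2 are exactly
  the functions with P f = f and with P f = 0 almost everywhere; hence both are closed.
  Right translation by gamma_r(s) commutes with the central translations (z, t) |-> (z, t + c), so
  I_r maps test functions independent of t to functions independent of t, and test functions
  chi(z) * sum_{k <> 0} v_k(z) e^(2ikt) to functions all of whose fibre means vanish.
  Functions chi(z) * (u(z) + sum_{k <> 0} v_k(z) e^(2ikt)) with a smooth cut-off chi are dense
  in L^2 (approximate by continuous functions, then use Stone-Weierstrass on C x S^1), and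
  applying P, resp. 1 - P, to such approximants gives approximants of the same shape inside
  L^2(C), resp. ^0L^2. Since T is Lipschitz and agrees with I_r on test functions, it maps both
  spaces into their closures, i.e. into themselves.
*)
theory Submission
  imports Defs "HOL-Computational_Algebra.Polynomial"
begin

section \<open>Smooth functions of one real variable\<close>

definition smooth_real :: "(real \<Rightarrow> real) \<Rightarrow> bool" where
  "smooth_real g \<longleftrightarrow> (\<exists>d. d 0 = g \<and> (\<forall>n x. (d n has_real_derivative d (Suc n) x) (at x)))"

lemma smooth_realE:
  assumes "smooth_real g"
  obtains g' where "\<And>x. (g has_real_derivative g' x) (at x)" "smooth_real g'"
proof -
  obtain d where d: "d 0 = g" "\<And>n x. (d n has_real_derivative d (Suc n) x) (at x)"
    using assms unfolding smooth_real_def by blast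
  have "smooth_real (d 1)" unfolding smooth_real_def
    by (rule exI[of _ "\<lambda>n. d (Suc n)"]) (use d in auto)
  then show ?thesis using that d by (metis One_nat_def)
qed

lemma smooth_real_id: "smooth_real (\<lambda>x. x)"
  unfolding smooth_real_def
  by (rule exI[of _ "\<lambda>n. if n = 0 then (\<lambda>x. x) else if n = 1 then (\<lambda>x. 1) else (\<lambda>x. 0)"])
     (auto intro!: derivative_eq_intros)

lemma smooth_real_cos: "smooth_real cos"
  unfolding smooth_real_def
proof (rule exI[of _ "\<lambda>n x. cos (x + real n * (pi/2))"], safe)
  fix n x
  have c: "cos (y + pi/2) = - sin y" for y by (simp add: cos_add)
  have "cos (x + real (Suc n) * (pi / 2)) = - sin (x + real n * (pi / 2))"
    using c[of "x + real n * (pi / 2)"] by (simp add: algebra_simps add_divide_distrib)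
  then show "((\<lambda>x. cos (x + real n * (pi / 2))) has_real_derivative cos (x + real (Suc n) * (pi / 2))) (at x)"
    by (auto intro!: derivative_eq_intros)
qed simp

lemma tendsto_power_poly_exp_neg_0:
  fixes p :: "real poly"
  shows "((\<lambda>y. y ^ m * poly p y * exp (- y)) \<longlongrightarrow> 0) at_top"
proof (induction p arbitrary: m)
  case (pCons a p)
  have "(\<lambda>y. y ^ m * poly (pCons a p) y * exp (- y)) =
     (\<lambda>y. a * (y ^ m / exp y) + y ^ Suc m * poly p y * exp (- y))"
    by (auto simp: exp_minus field_simps)
  moreover have "((\<lambda>y. a * (y ^ m / exp y) + y ^ Suc m * poly p y * exp (- y)) \<longlongrightarrow> a * 0 + 0) at_top"
    by (intro tendsto_intros tendsto_power_div_exp_0 pCons.IH)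
  ultimately show ?case by simp
qed simp

text \<open>For \<open>x > 0\<close> the \<open>n\<close>-th derivative of \<open>exp (- 1/x)\<close> is \<open>poly (flat_poly n) (1/x) * exp (- 1/x)\<close>.\<close>

fun flat_poly :: "nat \<Rightarrow> real poly" where
  "flat_poly 0 = 1"
| "flat_poly (Suc n) = [:0,0,1:] * (flat_poly n - pderiv (flat_poly n))"

definition flat_deriv :: "nat \<Rightarrow> real \<Rightarrow> real" where
  "flat_deriv n x = (if x > 0 then poly (flat_poly n) (1/x) * exp (- (1/x)) else 0)"

definition flat :: "real \<Rightarrow> real" where
  "flat x = (if x > 0 then exp (- (1/x)) else 0)"

lemma flat_deriv_0: "flat_deriv 0 = flat"
  by (simp add: fun_eq_iff flat_deriv_def flat_def)

lemma flat_deriv_has_derivative_pos: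
  assumes "x > 0"
  shows "(flat_deriv n has_real_derivative flat_deriv (Suc n) x) (at x)"
proof -
  have "((\<lambda>x. poly (flat_poly n) (1/x) * exp (- (1/x))) has_real_derivative
        (poly (pderiv (flat_poly n)) (1/x) * (- 1 / x^2) * exp (- (1/x))
          + poly (flat_poly n) (1/x) * (exp (- (1/x)) * (1 / x^2)))) (at x)"
    using assms by (auto intro!: derivative_eq_intros simp: power2_eq_square field_simps)
  moreover have "poly (pderiv (flat_poly n)) (1/x) * (- 1 / x^2) * exp (- (1/x))
      + poly (flat_poly n) (1/x) * (exp (- (1/x)) * (1 / x^2)) = flat_deriv (Suc n) x"
    using assms by (simp add: flat_deriv_def field_simps power2_eq_square)
  ultimately have d: "((\<lambda>x. poly (flat_poly n) (1/x) * exp (- (1/x))) has_real_derivative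
      flat_deriv (Suc n) x) (at x)"
    by simp
  show ?thesis
    by (rule has_field_derivative_transform_within_open[OF d, of "{0<..}"])
       (use assms in \<open>auto simp: flat_deriv_def\<close>)
qed

lemma flat_deriv_has_derivative_neg:
  assumes "x < 0"
  shows "(flat_deriv n has_real_derivative flat_deriv (Suc n) x) (at x)"
proof -
  have d: "((\<lambda>x. 0) has_real_derivative flat_deriv (Suc n) x) (at x)"
    using assms by (auto simp: flat_deriv_def)
  show ?thesis
    by (rule has_field_derivative_transform_within_open[OF d, of "{..<0}"])
       (use assms in \<open>auto simp: flat_deriv_def\<close>)
qed

lemma flat_deriv_has_derivative_0: "(flat_deriv n has_real_derivative flat_deriv (Suc n) 0) (at 0)"
proof -
  have "((\<lambda>y. y ^ 1 * poly (flat_poly n) y * exp (- y)) \<longlongrightarrow> 0) at_top"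
    by (rule tendsto_power_poly_exp_neg_0)
  moreover have "filterlim (\<lambda>h::real. 1 / h) at_top (at_right 0)"
    using filterlim_inverse_at_top_right by (simp add: inverse_eq_divide)
  ultimately have "((\<lambda>h. (1/h) ^ 1 * poly (flat_poly n) (1/h) * exp (- (1/h))) \<longlongrightarrow> 0) (at_right 0)"
    using filterlim_compose by fastforce
  then have right: "((\<lambda>h. (flat_deriv n h - flat_deriv n 0) / h) \<longlongrightarrow> 0) (at_right 0)"
    by (rule Lim_transform_eventually)
       (auto simp: eventually_at_right_less flat_deriv_def eventually_at_right_field intro!: exI[of _ 1])
  have "eventually (\<lambda>h. 0 = (flat_deriv n h - flat_deriv n 0) / h) (at_left (0::real))"
    by (auto simp: eventually_at_left_field flat_deriv_def intro!: exI[of _ "-1"])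
  then have left: "((\<lambda>h. (flat_deriv n h - flat_deriv n 0) / h) \<longlongrightarrow> 0) (at_left 0)"
    by (rule Lim_transform_eventually[OF tendsto_const])
  have "((\<lambda>h. (flat_deriv n (0 + h) - flat_deriv n 0) / h) \<longlongrightarrow> 0) (at 0)"
    using right left by (simp add: filterlim_split_at)
  then show ?thesis
    by (simp add: has_field_derivative_iff flat_deriv_def)
qed

lemma smooth_real_flat: "smooth_real flat"
  unfolding smooth_real_def
proof (rule exI[of _ flat_deriv], safe)
  fix n x
  show "(flat_deriv n has_real_derivative flat_deriv (Suc n) x) (at x)"
    using flat_deriv_has_derivative_pos flat_deriv_has_derivative_neg flat_deriv_has_derivative_0
    by (cases "x > 0"; cases "x < 0") (auto simp: not_less)
qed (simp add: flat_deriv_0)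

lemma flat_le_1: "flat x \<le> 1"
  and flat_nonneg: "0 \<le> flat x"
  and flat_pos: "x > 0 \<Longrightarrow> flat x > 0"
  and flat_eq_0: "x \<le> 0 \<Longrightarrow> flat x = 0"
  by (simp_all add: flat_def)

lemma continuous_on_flat: "continuous_on A flat"
  using smooth_real_flat unfolding smooth_real_def
  by (metis DERIV_isCont continuous_at_imp_continuous_on)

inductive elementary :: "(hpt \<Rightarrow> complex) \<Rightarrow> bool" where
  const: "elementary (\<lambda>p. c)"
| Re_fst: "elementary (\<lambda>p. complex_of_real (Re (fst p)))"
| Im_fst: "elementary (\<lambda>p. complex_of_real (Im (fst p)))"
| snd: "elementary (\<lambda>p. complex_of_real (snd p))"
| add: "elementary f \<Longrightarrow> elementary g \<Longrightarrow> elementary (\<lambda>p. f p + g p)"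
| mult: "elementary f \<Longrightarrow> elementary g \<Longrightarrow> elementary (\<lambda>p. f p * g p)"
| smooth_comp: "elementary f \<Longrightarrow> smooth_real g \<Longrightarrow> elementary (\<lambda>p. complex_of_real (g (Re (f p))))"

lemma elementary_has_derivative:
  assumes "elementary f"
  shows "\<exists>Df. (\<forall>x. (f has_derivative Df x) (at x)) \<and> (\<forall>v. elementary (\<lambda>x. Df x v))"
  using assms
proof induction
  case (const c)
  show ?case by (rule exI[of _ "\<lambda>x h. 0"]) (auto intro: elementary.const)
next
  case Re_fst
  have "bounded_linear (\<lambda>h::hpt. complex_of_real (Re (fst h)))"
    by (intro bounded_linear_compose[OF bounded_linear_of_real]
          bounded_linear_compose[OF bounded_linear_Re] bounded_linear_fst)
  then show ?case
    by (intro exI[of _ "\<lambda>x h. complex_of_real (Re (fst h))"])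
       (auto intro: elementary.const bounded_linear_imp_has_derivative)
next
  case Im_fst
  have "bounded_linear (\<lambda>h::hpt. complex_of_real (Im (fst h)))"
    by (intro bounded_linear_compose[OF bounded_linear_of_real]
          bounded_linear_compose[OF bounded_linear_Im] bounded_linear_fst)
  then show ?case
    by (intro exI[of _ "\<lambda>x h. complex_of_real (Im (fst h))"])
       (auto intro: elementary.const bounded_linear_imp_has_derivative)
next
  case snd
  have "bounded_linear (\<lambda>h::hpt. complex_of_real (snd h))"
    by (intro bounded_linear_compose[OF bounded_linear_of_real] bounded_linear_snd)
  then show ?case
    by (intro exI[of _ "\<lambda>x h. complex_of_real (snd h)"])
       (auto intro: elementary.const bounded_linear_imp_has_derivative)
next
  case (add f g)
  then obtain Df Dg where "\<And>x. (f has_derivative Df x) (at x)" "\<And>v. elementary (\<lambda>x. Df x v)"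
    and "\<And>x. (g has_derivative Dg x) (at x)" "\<And>v. elementary (\<lambda>x. Dg x v)" by blast
  then show ?case
    by (intro exI[of _ "\<lambda>x h. Df x h + Dg x h"]) (auto intro: elementary.add has_derivative_add)
next
  case (mult f g)
  then obtain Df Dg where "\<And>x. (f has_derivative Df x) (at x)" "\<And>v. elementary (\<lambda>x. Df x v)"
    and "\<And>x. (g has_derivative Dg x) (at x)" "\<And>v. elementary (\<lambda>x. Dg x v)" by blast
  then show ?case
    by (intro exI[of _ "\<lambda>x h. f x * Dg x h + Df x h * g x"])
       (auto intro!: elementary.add elementary.mult has_derivative_mult mult.hyps)
next
  case (smooth_comp f g)
  then obtain Df where f: "\<And>x. (f has_derivative Df x) (at x)" "\<And>v. elementary (\<lambda>x. Df x v)"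
    by blast
  obtain g' where g: "\<And>x. (g has_real_derivative g' x) (at x)" "smooth_real g'"
    using smooth_realE[OF smooth_comp.hyps(2)] by blast
  have "((\<lambda>p. complex_of_real (g (Re (f p)))) has_derivative
          (\<lambda>h. complex_of_real (g' (Re (f x)) * Re (Df x h)))) (at x)" for x
    using has_derivative_compose[OF has_derivative_Re[OF f(1)] g(1)[unfolded has_field_derivative_def]]
    by (intro has_derivative_of_real) (simp add: mult.commute)
  moreover have "elementary (\<lambda>x. complex_of_real (g' (Re (f x)) * Re (Df x v)))" for v
    using elementary.mult[OF elementary.smooth_comp[OF smooth_comp.hyps(1) g(2)]
        elementary.smooth_comp[OF f(2) smooth_real_id]]
    by simp
  ultimately show ?case
    by (intro exI[of _ "\<lambda>x h. complex_of_real (g' (Re (f x)) * Re (Df x h))"]) simp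
qed

lemma elementary_smooth_fun: "elementary f \<Longrightarrow> smooth_fun f"
proof (coinduction arbitrary: f rule: smooth_fun.coinduct)
  case (smooth_fun f)
  then obtain Df where f: "\<And>x. (f has_derivative Df x) (at x)" "\<And>v. elementary (\<lambda>x. Df x v)"
    using elementary_has_derivative by blast
  have Df: "frechet_derivative f (at x) = Df x" for x
    using frechet_derivative_at[OF f(1)] by simp
  show ?case
    using f by (auto simp: Df differentiable_def)
qed

lemma elementary_continuous: "elementary f \<Longrightarrow> continuous_on UNIV f"
  using elementary_has_derivative
  by (metis continuous_at_imp_continuous_on differentiable_def differentiable_imp_continuous_within)

lemma continuous_imp_measurable_lborel:
  fixes g :: "'a::euclidean_space \<Rightarrow> 'b::euclidean_space"
  shows "continuous_on UNIV g \<Longrightarrow> g \<in> borel_measurable lborel"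
  using borel_measurable_continuous_onI by simp

lemma elementary_measurable: "elementary f \<Longrightarrow> f \<in> borel_measurable lborel"
  by (intro continuous_imp_measurable_lborel elementary_continuous)

lemma elementary_cis_snd: "elementary (\<lambda>p. cis (a * snd p))"
proof -
  have cos_affine: "elementary (\<lambda>p. complex_of_real (cos (a * snd p + b)))" for b
    using elementary.smooth_comp[OF elementary.add[OF elementary.mult[OF elementary.const elementary.snd]
          elementary.const] smooth_real_cos, of "complex_of_real a" "complex_of_real b"]
    by simp
  have "elementary (\<lambda>p. complex_of_real (cos (a * snd p + 0)) + \<i> * complex_of_real (cos (a * snd p + - (pi/2))))"
    by (intro elementary.add elementary.mult elementary.const cos_affine)
  moreover have "cis x = complex_of_real (cos x) + \<i> * complex_of_real (cos (x - pi/2))" for x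
    by (simp add: complex_eq_iff cos_diff)
  ultimately show ?thesis by simp
qed

definition elementary_fst :: "(complex \<Rightarrow> complex) \<Rightarrow> bool" where
  "elementary_fst v \<longleftrightarrow> elementary (\<lambda>p. v (fst p))"

lemma elementary_fst_const: "elementary_fst (\<lambda>z. c)"
  by (simp add: elementary_fst_def elementary.const)

lemma elementary_fst_add: "elementary_fst u \<Longrightarrow> elementary_fst v \<Longrightarrow> elementary_fst (\<lambda>z. u z + v z)"
  by (simp add: elementary_fst_def elementary.add)

lemma elementary_fst_mult: "elementary_fst u \<Longrightarrow> elementary_fst v \<Longrightarrow> elementary_fst (\<lambda>z. u z * v z)"
  using elementary.mult[of "\<lambda>p. u (fst p)" "\<lambda>p. v (fst p)"] by (simp add: elementary_fst_def)

section \<open>Trigonometric polynomials in the central variable\<close>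

inductive trig_poly :: "(hpt \<Rightarrow> complex) \<Rightarrow> bool" where
  mode: "elementary_fst v \<Longrightarrow> trig_poly (\<lambda>p. v (fst p) * cis (2 * of_int k * snd p))"
| add: "trig_poly f \<Longrightarrow> trig_poly g \<Longrightarrow> trig_poly (\<lambda>p. f p + g p)"

inductive mean_zero_trig_poly :: "(hpt \<Rightarrow> complex) \<Rightarrow> bool" where
  zero: "mean_zero_trig_poly (\<lambda>p. 0)"
| mode: "elementary_fst v \<Longrightarrow> k \<noteq> 0 \<Longrightarrow> mean_zero_trig_poly (\<lambda>p. v (fst p) * cis (2 * of_int k * snd p))"
| add: "mean_zero_trig_poly f \<Longrightarrow> mean_zero_trig_poly g \<Longrightarrow> mean_zero_trig_poly (\<lambda>p. f p + g p)"

lemma trig_poly_mult_mode: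
  assumes "trig_poly f" "elementary_fst v"
  shows "trig_poly (\<lambda>p. f p * (v (fst p) * cis (2 * of_int k * snd p)))"
  using assms(1)
proof induction
  case (mode u l)
  have "trig_poly (\<lambda>p. (\<lambda>z. u z * v z) (fst p) * cis (2 * of_int (l + k) * snd p))"
    by (intro trig_poly.mode elementary_fst_mult mode assms(2))
  moreover have "(\<lambda>p. u (fst p) * cis (2 * of_int l * snd p) * (v (fst p) * cis (2 * of_int k * snd p)))
     = (\<lambda>p. (\<lambda>z. u z * v z) (fst p) * cis (2 * of_int (l + k) * snd p))"
    by (rule ext) (simp add: cis_mult algebra_simps)
  ultimately show ?case by simp
next
  case (add f g)
  then show ?case using trig_poly.add[OF add.IH] by (simp add: algebra_simps)
qed

lemma trig_poly_mult:
  assumes "trig_poly f" "trig_poly g"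
  shows "trig_poly (\<lambda>p. f p * g p)"
  using assms(2)
proof induction
  case (mode v k)
  then show ?case using trig_poly_mult_mode[OF assms(1)] by blast
next
  case (add g h)
  then show ?case using trig_poly.add[OF add.IH] by (simp add: algebra_simps)
qed

lemma trig_poly_decompose:
  assumes "trig_poly f"
  shows "\<exists>u f'. elementary_fst u \<and> mean_zero_trig_poly f' \<and> f = (\<lambda>p. u (fst p) + f' p)"
  using assms
proof induction
  case (mode v k)
  show ?case
  proof (cases "k = 0")
    case True
    then show ?thesis using mode mean_zero_trig_poly.zero by (intro exI[of _ v] exI[of _ "\<lambda>p. 0"]) auto
  next
    case False
    then show ?thesis using mode mean_zero_trig_poly.mode[OF mode False] elementary_fst_const
      by (intro exI[of _ "\<lambda>z. 0"] exI[of _ "\<lambda>p. v (fst p) * cis (2 * of_int k * snd p)"]) auto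
  qed
next
  case (add f g)
  then obtain u1 f1 u2 f2 where "elementary_fst u1" "mean_zero_trig_poly f1" "f = (\<lambda>p. u1 (fst p) + f1 p)"
     "elementary_fst u2" "mean_zero_trig_poly f2" "g = (\<lambda>p. u2 (fst p) + f2 p)" by blast
  then show ?case
    by (intro exI[of _ "\<lambda>z. u1 z + u2 z"] exI[of _ "\<lambda>p. f1 p + f2 p"])
       (auto intro: elementary_fst_add mean_zero_trig_poly.add)
qed

lemma mean_zero_trig_poly_elementary: "mean_zero_trig_poly f \<Longrightarrow> elementary f"
proof (induction rule: mean_zero_trig_poly.induct)
  case (mode v k)
  then show ?case
    using elementary.mult[OF _ elementary_cis_snd[of "2 * of_int k"]] by (simp add: elementary_fst_def)
qed (auto intro: elementary.const elementary.add)

lemma trig_poly_elementary: "trig_poly f \<Longrightarrow> elementary f"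
proof (induction rule: trig_poly.induct)
  case (mode v k)
  then show ?case
    using elementary.mult[OF _ elementary_cis_snd[of "2 * of_int k"]] by (simp add: elementary_fst_def)
qed (auto intro: elementary.add)

lemma mean_zero_trig_poly_periodic: "mean_zero_trig_poly f \<Longrightarrow> f (z, t + pi) = f (z, t)"
proof (induction rule: mean_zero_trig_poly.induct)
  case (mode v k)
  have "cis (2 * of_int k * (t + pi)) = cis (2 * of_int k * t) * cis (2 * pi * of_int k)"
    by (simp add: cis_mult algebra_simps)
  also have "cis (2 * pi * of_int k) = 1" by (rule cis_multiple_2pi) simp
  finally show ?case by simp
qed auto

text \<open>Polynomials in \<open>Re z\<close>, \<open>Im z\<close>, \<open>w\<close> and \<open>cnj w\<close>; substituting \<open>w = cis (2 t)\<close> turns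
  them into trigonometric polynomials, so Stone-Weierstrass on \<open>\<complex> \<times> S\<^sup>1\<close> applies.\<close>

inductive poly_zw :: "(complex \<times> complex \<Rightarrow> complex) \<Rightarrow> bool" where
  const: "poly_zw (\<lambda>q. c)"
| Re_z: "poly_zw (\<lambda>q. complex_of_real (Re (fst q)))"
| Im_z: "poly_zw (\<lambda>q. complex_of_real (Im (fst q)))"
| w: "poly_zw (\<lambda>q. snd q)"
| cnj_w: "poly_zw (\<lambda>q. cnj (snd q))"
| add: "poly_zw f \<Longrightarrow> poly_zw g \<Longrightarrow> poly_zw (\<lambda>q. f q + g q)"
| mult: "poly_zw f \<Longrightarrow> poly_zw g \<Longrightarrow> poly_zw (\<lambda>q. f q * g q)"

lemma poly_zw_cnj: "poly_zw f \<Longrightarrow> poly_zw (\<lambda>q. cnj (f q))"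
  by (induction rule: poly_zw.induct) (auto intro: poly_zw.intros)

lemma continuous_on_poly_zw: "poly_zw f \<Longrightarrow> continuous_on S f"
  by (induction rule: poly_zw.induct) (auto intro!: continuous_intros)

lemma trig_poly_poly_zw_cis: "poly_zw h \<Longrightarrow> trig_poly (\<lambda>p. h (fst p, cis (2 * snd p)))"
proof (induction rule: poly_zw.induct)
  case (const c)
  then show ?case using trig_poly.mode[OF elementary_fst_const[of c], of 0] by simp
next
  case Re_z
  have "elementary_fst (\<lambda>z. complex_of_real (Re z))" by (simp add: elementary_fst_def elementary.Re_fst)
  then show ?case using trig_poly.mode[of "\<lambda>z. complex_of_real (Re z)" 0] by simp
next
  case Im_z
  have "elementary_fst (\<lambda>z. complex_of_real (Im z))" by (simp add: elementary_fst_def elementary.Im_fst)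
  then show ?case using trig_poly.mode[of "\<lambda>z. complex_of_real (Im z)" 0] by simp
next
  case w
  then show ?case using trig_poly.mode[OF elementary_fst_const[of 1], of 1] by simp
next
  case cnj_w
  have "cnj (cis (2 * x)) = cis (2 * of_int (-1) * x)" for x
    by (simp add: cis_cnj)
  then show ?case using trig_poly.mode[OF elementary_fst_const[of 1], of "-1"] by simp
next
  case (add f g) then show ?case by (intro trig_poly.add)
next
  case (mult f g) then show ?case by (intro trig_poly_mult)
qed

lemma poly_zw_Re_separating:
  assumes "x \<noteq> y"
  shows "\<exists>h. poly_zw h \<and> Re (h x) \<noteq> Re (h y)"
proof -
  obtain z w z' w' where xy: "x = (z, w)" "y = (z', w')" by fastforce
  have "Re z \<noteq> Re z' \<or> Im z \<noteq> Im z' \<or> Re w \<noteq> Re w' \<or> Im w \<noteq> Im w'"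
    using assms xy by (auto simp: complex_eq_iff)
  then show ?thesis
  proof (elim disjE)
    assume "Re z \<noteq> Re z'" then show ?thesis
      using xy by (intro exI[of _ "\<lambda>q. complex_of_real (Re (fst q))"]) (auto intro: poly_zw.Re_z)
  next
    assume "Im z \<noteq> Im z'" then show ?thesis
      using xy by (intro exI[of _ "\<lambda>q. complex_of_real (Im (fst q))"]) (auto intro: poly_zw.Im_z)
  next
    assume "Re w \<noteq> Re w'" then show ?thesis
      using xy by (intro exI[of _ "\<lambda>q. snd q"]) (auto intro: poly_zw.w)
  next
    assume "Im w \<noteq> Im w'"
    moreover have "poly_zw (\<lambda>q. (\<lambda>q. - \<i>) q * snd q)" by (intro poly_zw.mult poly_zw.const poly_zw.w)
    ultimately show ?thesis
      using xy by (intro exI[of _ "\<lambda>q. - \<i> * snd q"]) auto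
  qed
qed

lemma poly_zw_Re_approx:
  assumes "compact S" "continuous_on S f" "0 < e"
  shows "\<exists>h. poly_zw h \<and> (\<forall>x\<in>S. \<bar>f x - Re (h x)\<bar> < e)"
proof -
  define R where "R g \<longleftrightarrow> (\<exists>h. poly_zw h \<and> g = (\<lambda>q. Re (h q)))" for g
  have "\<exists>g. R g \<and> (\<forall>x \<in> S. \<bar>f x - g x\<bar> < e)"
  proof (rule Stone_Weierstrass_HOL[OF assms(1) _ _ _ _ _ assms(2,3)])
    show "R (\<lambda>x. c)" for c
      unfolding R_def by (rule exI[of _ "\<lambda>q. complex_of_real c"]) (auto intro: poly_zw.const)
    show "R g \<Longrightarrow> continuous_on S g" for g
      unfolding R_def by (auto intro!: continuous_intros continuous_on_poly_zw)
    show "R f \<and> R g \<Longrightarrow> R (\<lambda>x. f x + g x)" for f g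
    proof -
      assume "R f \<and> R g"
      then obtain a b where "poly_zw a" "poly_zw b" "f = (\<lambda>q. Re (a q))" "g = (\<lambda>q. Re (b q))"
        unfolding R_def by blast
      then show ?thesis unfolding R_def
        by (intro exI[of _ "\<lambda>q. a q + b q"]) (auto intro: poly_zw.add)
    qed
    show "R f \<and> R g \<Longrightarrow> R (\<lambda>x. f x * g x)" for f g
    proof -
      assume "R f \<and> R g"
      then obtain a b where ab: "poly_zw a" "poly_zw b" "f = (\<lambda>q. Re (a q))" "g = (\<lambda>q. Re (b q))"
        unfolding R_def by blast
      have "poly_zw (\<lambda>q. (\<lambda>q. 1/2) q * ((\<lambda>q. a q * b q) q + (\<lambda>q. a q * cnj (b q)) q))"
        by (intro poly_zw.mult poly_zw.add poly_zw.const poly_zw_cnj ab)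
      moreover have "Re x * Re y = Re (1/2 * (x * y + x * cnj y))" for x y
        by (simp add: field_simps)
      ultimately show ?thesis unfolding R_def ab
        by (intro exI[of _ "\<lambda>q. 1/2 * (a q * b q + a q * cnj (b q))"]) auto
    qed
    show "\<exists>f. R f \<and> f x \<noteq> f y" if "x \<in> S \<and> y \<in> S \<and> x \<noteq> y" for x y
    proof -
      from that have "x \<noteq> y" by simp
      from poly_zw_Re_separating[OF this] obtain h where h: "poly_zw h" "Re (h x) \<noteq> Re (h y)"
        by blast
      have "R (\<lambda>q. Re (h q))" unfolding R_def using h(1) by (intro exI[of _ h] conjI refl)
      then show ?thesis using h(2) by (intro exI[of _ "\<lambda>q. Re (h q)"] conjI)
    qed
  qed
  then obtain g h where "poly_zw h" "g = (\<lambda>q. Re (h q))" "\<forall>x\<in>S. \<bar>f x - g x\<bar> < e"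
    unfolding R_def by blast
  then show ?thesis by blast
qed

lemma poly_zw_uniform_approx:
  assumes "compact S" "continuous_on S f" "0 < e"
  shows "\<exists>h. poly_zw h \<and> (\<forall>x\<in>S. cmod (f x - h x) < e)"
proof -
  have e: "0 < e / 2" using assms(3) by simp
  obtain h1 where h1: "poly_zw h1" "\<And>x. x \<in> S \<Longrightarrow> \<bar>Re (f x) - Re (h1 x)\<bar> < e / 2"
    using poly_zw_Re_approx[OF assms(1) continuous_on_Re[OF assms(2)] e] by blast
  obtain h2 where h2: "poly_zw h2" "\<And>x. x \<in> S \<Longrightarrow> \<bar>Im (f x) - Re (h2 x)\<bar> < e / 2"
    using poly_zw_Re_approx[OF assms(1) continuous_on_Im[OF assms(2)] e] by blast
  define h where "h q = (1/2) * (h1 q + cnj (h1 q)) + (\<i>/2) * (h2 q + cnj (h2 q))" for q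
  have hRe: "Re (h q) = Re (h1 q)" and hIm: "Im (h q) = Re (h2 q)" for q
    by (simp_all add: h_def)
  have "poly_zw h" unfolding h_def
    by (intro poly_zw.add poly_zw.mult poly_zw.const poly_zw_cnj h1(1) h2(1))
  moreover have "cmod (f x - h x) < e" if "x \<in> S" for x
  proof -
    have "cmod (f x - h x) \<le> \<bar>Re (f x - h x)\<bar> + \<bar>Im (f x - h x)\<bar>" by (rule cmod_le)
    also have "\<dots> < e / 2 + e / 2" using h1(2)[OF that] h2(2)[OF that] by (simp add: hRe hIm)
    finally show ?thesis by simp
  qed
  ultimately show ?thesis by blast
qed

definition L2sq :: "(hpt \<Rightarrow> complex) \<Rightarrow> ennreal" where
  "L2sq f = (\<integral>\<^sup>+p. indicator fdom p * ennreal ((cmod (f p))\<^sup>2) \<partial>lborel)"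

lemma Times_in_sets_lborel:
  fixes A :: "complex set" and B :: "real set"
  assumes "A \<in> sets borel" "B \<in> sets borel"
  shows "A \<times> B \<in> sets (lborel :: hpt measure)"
proof -
  have "A \<times> B \<in> sets ((lborel::complex measure) \<Otimes>\<^sub>M (lborel::real measure))"
    using assms by (intro pair_measureI) auto
  then show ?thesis unfolding lborel_prod by simp
qed

lemma fdom_sets: "fdom \<in> sets borel"
  using Times_in_sets_lborel[of UNIV "{0..<pi}"] by (simp add: fdom_def)

lemma pred_in_fdom [measurable]: "Measurable.pred borel (\<lambda>x. x \<in> fdom)"
  using fdom_sets by (simp add: pred_def)

lemma emeasure_cball_strip_finite: "emeasure (lborel :: hpt measure) (cball 0 R \<times> {0..<pi}) < \<infinity>"
  by (intro emeasure_bounded_finite bounded_Times) auto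

lemma L2sq_integrand_measurable [measurable]:
  assumes [measurable]: "f \<in> borel_measurable lborel"
  shows "(\<lambda>p. indicator fdom p * ennreal ((cmod (f p))\<^sup>2)) \<in> borel_measurable lborel"
  by measurable

lemma L2sq_cong_AE:
  assumes "AE p in lborel. p \<in> fdom \<longrightarrow> f p = g p"
  shows "L2sq f = L2sq g"
  unfolding L2sq_def
  by (intro nn_integral_cong_AE) (use assms in \<open>auto simp: indicator_def elim!: eventually_mono\<close>)

lemma L2sq_diff_commute: "L2sq (\<lambda>p. f p - g p) = L2sq (\<lambda>p. g p - f p)"
  unfolding L2sq_def by (simp add: norm_minus_commute)

lemma L2sq_add_le:
  assumes [measurable]: "f \<in> borel_measurable lborel" "g \<in> borel_measurable lborel"
  shows "L2sq (\<lambda>p. f p + g p) \<le> 2 * L2sq f + 2 * L2sq g"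
proof -
  have sq: "(cmod (x + y))\<^sup>2 \<le> 2 * (cmod x)\<^sup>2 + 2 * (cmod y)\<^sup>2" for x y :: complex
  proof -
    have "(cmod (x + y))\<^sup>2 \<le> (cmod x + cmod y)\<^sup>2"
      by (simp add: norm_triangle_ineq power_mono)
    also have "\<dots> \<le> 2 * (cmod x)\<^sup>2 + 2 * (cmod y)\<^sup>2"
      using zero_le_power2[of "cmod x - cmod y"] by (simp add: power2_eq_square algebra_simps)
    finally show ?thesis .
  qed
  have "L2sq (\<lambda>p. f p + g p) \<le> (\<integral>\<^sup>+p. 2 * (indicator fdom p * ennreal ((cmod (f p))\<^sup>2))
        + 2 * (indicator fdom p * ennreal ((cmod (g p))\<^sup>2)) \<partial>lborel)"
    unfolding L2sq_def
  proof (intro nn_integral_mono)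
    fix p
    have "ennreal ((cmod (f p + g p))\<^sup>2) \<le> ennreal (2 * (cmod (f p))\<^sup>2 + 2 * (cmod (g p))\<^sup>2)"
      using sq by (rule ennreal_leI)
    then show "indicator fdom p * ennreal ((cmod (f p + g p))\<^sup>2) \<le>
       2 * (indicator fdom p * ennreal ((cmod (f p))\<^sup>2)) + 2 * (indicator fdom p * ennreal ((cmod (g p))\<^sup>2))"
      by (simp add: indicator_def ennreal_plus ennreal_mult)
  qed
  also have "\<dots> = 2 * L2sq f + 2 * L2sq g"
    unfolding L2sq_def by (simp add: nn_integral_add nn_integral_cmult)
  finally show ?thesis .
qed

lemma L2sq_triangle:
  assumes [measurable]: "f \<in> borel_measurable lborel" "g \<in> borel_measurable lborel" "h \<in> borel_measurable lborel"
  shows "L2sq (\<lambda>p. f p - h p) \<le> 2 * L2sq (\<lambda>p. f p - g p) + 2 * L2sq (\<lambda>p. g p - h p)"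
  using L2sq_add_le[of "\<lambda>p. f p - g p" "\<lambda>p. g p - h p"] by simp

lemma L2sq_eq_0_iff:
  assumes [measurable]: "f \<in> borel_measurable lborel"
  shows "L2sq f = 0 \<longleftrightarrow> (AE p in lborel. p \<in> fdom \<longrightarrow> f p = 0)"
  unfolding L2sq_def nn_integral_0_iff_AE[OF L2sq_integrand_measurable[OF assms]]
  by (intro arg_cong[where f="\<lambda>P. eventually P _"] ext) (auto simp: indicator_def)

lemma L2H_iff_L2sq: "f \<in> L2H \<longleftrightarrow> f \<in> borel_measurable lborel \<and> pi_periodic f \<and> L2sq f < \<infinity>"
proof -
  have "set_integrable lborel fdom (\<lambda>p. (cmod (f p))\<^sup>2) \<longleftrightarrow> L2sq f < \<infinity>"
    if [measurable]: "f \<in> borel_measurable lborel"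
  proof -
    have "(\<integral>\<^sup>+p. ennreal (norm (indicator fdom p *\<^sub>R (cmod (f p))\<^sup>2)) \<partial>lborel) = L2sq f"
      unfolding L2sq_def by (intro nn_integral_cong) (auto simp: indicator_def)
    then show ?thesis
      unfolding set_integrable_def integrable_iff_bounded by simp
  qed
  then show ?thesis unfolding L2H_def by auto
qed

lemma L2sq_L2norm:
  assumes "f \<in> L2H"
  shows "L2sq f = ennreal ((L2norm f)\<^sup>2)"
proof -
  have [measurable]: "f \<in> borel_measurable lborel" using assms L2H_iff_L2sq by blast
  have i: "integrable lborel (\<lambda>p. indicator fdom p *\<^sub>R (cmod (f p))\<^sup>2)"
    using assms unfolding L2H_def set_integrable_def by blast
  have "0 \<le> (LINT p:fdom|lborel. (cmod (f p))\<^sup>2)"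
    unfolding set_lebesgue_integral_def by (intro integral_nonneg_AE) auto
  moreover have "L2sq f = ennreal (LINT p:fdom|lborel. (cmod (f p))\<^sup>2)"
    unfolding L2sq_def set_lebesgue_integral_def
    by (subst nn_integral_eq_integral[OF i, symmetric]) (auto simp: indicator_def intro!: nn_integral_cong)
  ultimately show ?thesis unfolding L2norm_def by simp
qed

lemma L2norm_nonneg: "0 \<le> L2norm f"
  unfolding L2norm_def set_lebesgue_integral_def by (auto intro!: integral_nonneg_AE)

lemma L2H_diff:
  assumes "f \<in> L2H" "g \<in> L2H"
  shows "(\<lambda>p. f p - g p) \<in> L2H"
proof -
  have [measurable]: "f \<in> borel_measurable lborel" "g \<in> borel_measurable lborel"
    and "L2sq f < \<infinity>" "L2sq g < \<infinity>" using assms L2H_iff_L2sq by auto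
  have "L2sq (\<lambda>p. f p + (- g p)) \<le> 2 * L2sq f + 2 * L2sq (\<lambda>p. - g p)"
    by (rule L2sq_add_le) auto
  also have "\<dots> < \<infinity>" using \<open>L2sq f < \<infinity>\<close> \<open>L2sq g < \<infinity>\<close>
    by (simp add: L2sq_def ennreal_mult_less_top)
  finally show ?thesis
    using assms unfolding L2H_iff_L2sq pi_periodic_def by auto
qed

lemma L2sq_le_bounded_support:
  assumes "\<And>p. p \<in> fdom \<Longrightarrow> cmod (f p) \<le> (if cmod (fst p) \<le> R then M else 0)" and "0 \<le> M"
  shows "L2sq f \<le> ennreal (M\<^sup>2) * emeasure lborel (cball (0::complex) R \<times> {0..<pi})"
proof -
  have "L2sq f \<le> (\<integral>\<^sup>+p. ennreal (M\<^sup>2) * indicator (cball (0::complex) R \<times> {0..<pi}) p \<partial>lborel)"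
    unfolding L2sq_def
  proof (intro nn_integral_mono)
    fix p :: hpt
    show "indicator fdom p * ennreal ((cmod (f p))\<^sup>2) \<le> ennreal (M\<^sup>2) * indicator (cball 0 R \<times> {0..<pi}) p"
    proof (cases "p \<in> fdom")
      case True
      note bound = assms(1)[OF True]
      show ?thesis
      proof (cases "cmod (fst p) \<le> R")
        case True
        then have "(cmod (f p))\<^sup>2 \<le> M\<^sup>2" using bound by (intro power_mono) auto
        moreover have "p \<in> cball 0 R \<times> {0..<pi}" using True \<open>p \<in> fdom\<close> by (cases p) (auto simp: fdom_def)
        ultimately show ?thesis using \<open>p \<in> fdom\<close> by (simp add: ennreal_leI)
      qed (use bound in simp)
    qed simp
  qed
  also have "\<dots> = ennreal (M\<^sup>2) * emeasure lborel (cball (0::complex) R \<times> {0..<pi})"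
    by (rule nn_integral_cmult_indicator) (intro Times_in_sets_lborel; simp)
  finally show ?thesis .
qed

lemma ennreal_mult_less_if_less_divide:
  assumes "x < ennreal (e / c)" "0 < c"
  shows "ennreal c * x < ennreal e"
proof -
  have "0 < ennreal (e / c)" using assms(1) by (rule le_less_trans[OF zero_le])
  then have "0 < e" using assms(2) by (simp add: zero_less_divide_iff)
  have "ennreal c * x < ennreal c * ennreal (e / c)"
    using assms by (intro ennreal_mult_strict_left_mono) auto
  also have "\<dots> = ennreal e"
    using assms \<open>0 < e\<close> by (simp add: ennreal_mult[symmetric])
  finally show ?thesis .
qed

lemma ennreal_eq_0_if_less_all:
  fixes x :: ennreal
  assumes "\<And>e. 0 < e \<Longrightarrow> x < ennreal e"
  shows "x = 0"
proof -
  have "x \<le> 0"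
    by (rule ennreal_le_epsilon) (use assms in \<open>auto intro: less_imp_le\<close>)
  then show ?thesis by simp
qed

section \<open>Averaging over the central fibres\<close>

lemma AE_lborel_fst:
  assumes "AE z in lborel. P z"
  shows "AE p in (lborel::hpt measure). P (fst p)"
proof -
  obtain N where N0: "{z \<in> space lborel. \<not> P z} \<subseteq> N" "emeasure lborel N = 0"
    "N \<in> sets (lborel::complex measure)"
    using assms by (rule AE_E)
  then have N: "{z \<in> space lborel. \<not> P z} \<subseteq> N" "N \<in> null_sets (lborel::complex measure)"
    by auto
  have "N \<times> UNIV \<in> null_sets ((lborel::complex measure) \<Otimes>\<^sub>M (lborel::real measure))"
    using N(2) by (intro lborel.times_in_null_sets1) auto
  then have "N \<times> UNIV \<in> null_sets (lborel::hpt measure)" by (simp add: lborel_prod)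
  then show ?thesis
    by (rule AE_I') (use N(1) in auto)
qed

lemma AE_lborel_pair_fdom:
  assumes "AE p in (lborel::hpt measure). p \<in> fdom \<longrightarrow> P p"
  shows "AE z in lborel. AE t in lborel. t \<in> {0..<pi} \<longrightarrow> P (z, t)"
proof -
  have "AE p in (lborel::complex measure) \<Otimes>\<^sub>M (lborel::real measure). p \<in> fdom \<longrightarrow> P p"
    by (subst lborel_prod) (rule assms)
  from lborel_pair.AE_pair[OF this] show ?thesis by (simp add: fdom_def)
qed

lemma AE_fst_if_AE_fdom:
  assumes "AE p in (lborel::hpt measure). p \<in> fdom \<longrightarrow> P (fst p)"
  shows "AE z in lborel. P z"
  using AE_lborel_pair_fdom[OF assms]
proof (rule eventually_mono)
  fix z assume h: "AE t in lborel. t \<in> {0..<pi} \<longrightarrow> P (fst (z, t))"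
  show "P z"
  proof (rule ccontr)
    assume "\<not> P z"
    then have "AE t in lborel. t \<notin> {0..<pi}" using h by (auto elim!: eventually_mono)
    then have "{0..<pi} \<in> null_sets (lborel::real measure)"
      by (subst AE_iff_null_sets) auto
    then show False by (simp add: null_sets_def)
  qed
qed

definition fibre_avg :: "(hpt \<Rightarrow> complex) \<Rightarrow> hpt \<Rightarrow> complex" where
  "fibre_avg f p = (LINT s:{0..pi}|lborel. f (fst p, s)) / pi"

lemma fibre_measurable:
  fixes f :: "hpt \<Rightarrow> complex"
  assumes "f \<in> borel_measurable lborel"
  shows "(\<lambda>s. indicator {0..pi} s *\<^sub>R f (z, s)) \<in> borel_measurable lborel"
proof -
  have m: "(\<lambda>s. f (z, s)) \<in> borel_measurable lborel"
    using assms by (simp add: lborel_prod[symmetric])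
  show ?thesis by (rule borel_measurable_scaleR[OF borel_measurable_indicator m]) simp
qed

lemma fibre_avg_measurable [measurable]:
  assumes "f \<in> borel_measurable lborel"
  shows "fibre_avg f \<in> borel_measurable lborel"
proof -
  have "f \<in> borel_measurable ((lborel::complex measure) \<Otimes>\<^sub>M (lborel::real measure))"
    using assms by (simp add: lborel_prod)
  then have "(\<lambda>(z, s). indicator {0..pi} s *\<^sub>R f (z, s)) \<in> borel_measurable ((lborel::complex measure) \<Otimes>\<^sub>M (lborel::real measure))"
    by measurable
  then have "(\<lambda>z. \<integral>s. indicator {0..pi} s *\<^sub>R f (z, s) \<partial>lborel) \<in> borel_measurable (lborel::complex measure)"
    by (rule lborel.borel_measurable_lebesgue_integral[where f="\<lambda>z s. indicator {0..pi} s *\<^sub>R f (z, s)", simplified])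
  then have "(\<lambda>p. (\<integral>s. indicator {0..pi} s *\<^sub>R f (fst p, s) \<partial>lborel) / pi) \<in> borel_measurable ((lborel::complex measure) \<Otimes>\<^sub>M (lborel::real measure))"
    by measurable
  moreover have "fibre_avg f = (\<lambda>p. (\<integral>s. indicator {0..pi} s *\<^sub>R f (fst p, s) \<partial>lborel) / pi)"
    by (auto simp: fibre_avg_def set_lebesgue_integral_def fun_eq_iff)
  ultimately show ?thesis
    by (simp add: lborel_prod)
qed

lemma fibre_avg_fst: "fibre_avg (\<lambda>p. h (fst p)) p = h (fst p)"
  by (simp add: fibre_avg_def set_integral_const measure_def scaleR_conv_of_real)

lemma L2sq_fibres:
  assumes [measurable]: "f \<in> borel_measurable lborel"
  shows "L2sq f = (\<integral>\<^sup>+z. (\<integral>\<^sup>+t. indicator {0..pi} t * ennreal ((cmod (f (z, t)))\<^sup>2) \<partial>lborel) \<partial>lborel)"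
proof -
  have m: "(\<lambda>p. indicator fdom p * ennreal ((cmod (f p))\<^sup>2)) \<in> borel_measurable ((lborel::complex measure) \<Otimes>\<^sub>M (lborel::real measure))"
    using L2sq_integrand_measurable[OF assms] by (simp add: lborel_prod)
  have "L2sq f = (\<integral>\<^sup>+z. (\<integral>\<^sup>+t. indicator fdom (z, t) * ennreal ((cmod (f (z, t)))\<^sup>2) \<partial>lborel) \<partial>lborel)"
    unfolding L2sq_def lborel.nn_integral_fst[OF m] lborel_prod ..
  also have "\<dots> = (\<integral>\<^sup>+z. (\<integral>\<^sup>+t. indicator {0..pi} t * ennreal ((cmod (f (z, t)))\<^sup>2) \<partial>lborel) \<partial>lborel)"
    by (intro nn_integral_cong nn_integral_cong_AE)
       (use AE_lborel_singleton[of pi] in \<open>auto simp: fdom_def indicator_def elim!: eventually_mono\<close>)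
  finally show ?thesis .
qed

lemma set_integrable_if_square_integrable:
  fixes u :: "real \<Rightarrow> complex"
  assumes [measurable]: "u \<in> borel_measurable lborel"
    and fin: "(\<integral>\<^sup>+t. indicator {0..pi} t * ennreal ((cmod (u t))\<^sup>2) \<partial>lborel) < \<infinity>"
  shows "set_integrable lborel {0..pi} u"
proof -
  have "(\<integral>\<^sup>+t. ennreal (norm (indicator {0..pi} t *\<^sub>R u t)) \<partial>lborel) \<le>
        (\<integral>\<^sup>+t. indicator {0..pi} t * 1 + indicator {0..pi} t * ennreal ((cmod (u t))\<^sup>2) \<partial>lborel)"
  proof (intro nn_integral_mono)
    fix t
    have "cmod (u t) \<le> 1 + (cmod (u t))\<^sup>2"
      using zero_le_power2[of "cmod (u t) - 1/2"] by (simp add: power2_eq_square algebra_simps)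
    then have "ennreal (cmod (u t)) \<le> 1 + ennreal ((cmod (u t))\<^sup>2)"
      by (metis ennreal_1 ennreal_leI ennreal_plus norm_ge_zero zero_le_power2 zero_le_one)
    then show "ennreal (norm (indicator {0..pi} t *\<^sub>R u t))
        \<le> indicator {0..pi} t * 1 + indicator {0..pi} t * ennreal ((cmod (u t))\<^sup>2)"
      by (auto simp: indicator_def)
  qed
  also have "\<dots> = emeasure lborel {0..pi} + (\<integral>\<^sup>+t. indicator {0..pi} t * ennreal ((cmod (u t))\<^sup>2) \<partial>lborel)"
    by (subst nn_integral_add) auto
  also have "\<dots> < \<infinity>" using fin by simp
  finally show ?thesis
    unfolding set_integrable_def integrable_iff_bounded by auto
qed

definition fibre_integrable :: "(hpt \<Rightarrow> complex) \<Rightarrow> bool" where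
  "fibre_integrable f \<longleftrightarrow> (AE z in lborel. set_integrable lborel {0..pi} (\<lambda>s. f (z, s)))"

lemma fibre_integrable_if_L2sq_finite:
  assumes [measurable]: "f \<in> borel_measurable lborel" and "L2sq f < \<infinity>"
  shows "fibre_integrable f"
proof -
  have [measurable]: "f \<in> borel_measurable ((lborel::complex measure) \<Otimes>\<^sub>M (lborel::real measure))"
    using assms by (simp add: lborel_prod)
  have "(\<lambda>p. indicator {0..pi} (snd p) * ennreal ((cmod (f p))\<^sup>2))
      \<in> borel_measurable ((lborel::complex measure) \<Otimes>\<^sub>M (lborel::real measure))"
    by measurable
  then have "AE z in lborel. (\<integral>\<^sup>+t. indicator {0..pi} t * ennreal ((cmod (f (z, t)))\<^sup>2) \<partial>lborel) \<noteq> \<infinity>"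
    using assms(2) unfolding L2sq_fibres[OF assms(1)]
    by (intro nn_integral_PInf_AE) (use lborel.borel_measurable_nn_integral_fst in auto)
  then show ?thesis unfolding fibre_integrable_def
    by (rule eventually_mono) (auto intro: set_integrable_if_square_integrable simp: top.not_eq_extremum)
qed

lemma L2H_fibre_integrable: "f \<in> L2H \<Longrightarrow> fibre_integrable f"
  by (simp add: L2H_iff_L2sq fibre_integrable_if_L2sq_finite)

lemma fibre_avg_diff:
  assumes "fibre_integrable f" "fibre_integrable g"
  shows "AE p in lborel. fibre_avg (\<lambda>p. f p - g p) p = fibre_avg f p - fibre_avg g p"
proof -
  have "AE z in lborel. set_integrable lborel {0..pi} (\<lambda>s. f (z, s)) \<and> set_integrable lborel {0..pi} (\<lambda>s. g (z, s))"
    using assms unfolding fibre_integrable_def by eventually_elim auto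
  from AE_lborel_fst[OF this] show ?thesis
    by eventually_elim (simp add: fibre_avg_def diff_divide_distrib)
qed

lemma fibre_integral_cong_AE:
  assumes "\<And>z. (\<lambda>s. indicator {0..pi} s *\<^sub>R f (z, s)) \<in> borel_measurable lborel"
    and "\<And>z. (\<lambda>s. indicator {0..pi} s *\<^sub>R g (z, s)) \<in> borel_measurable lborel"
    and "AE p in lborel. p \<in> fdom \<longrightarrow> f p = g p"
  shows "AE z in lborel. (LINT s:{0..pi}|lborel. f (z, s)) = (LINT s:{0..pi}|lborel. g (z, s))"
  using AE_lborel_pair_fdom[OF assms(3)]
proof (rule eventually_mono)
  fix z assume h: "AE t in lborel. t \<in> {0..<pi} \<longrightarrow> f (z, t) = g (z, t)"
  have "AE s in lborel. indicator {0..pi} s *\<^sub>R f (z, s) = indicator {0..pi} s *\<^sub>R g (z, s)"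
    using h AE_lborel_singleton[of pi] by eventually_elim (auto simp: indicator_def)
  then show "(LINT s:{0..pi}|lborel. f (z, s)) = (LINT s:{0..pi}|lborel. g (z, s))"
    unfolding set_lebesgue_integral_def by (rule integral_cong_AE[OF assms(1,2)])
qed

lemma fibre_avg_cong_AE:
  assumes "\<And>z. (\<lambda>s. indicator {0..pi} s *\<^sub>R f (z, s)) \<in> borel_measurable lborel"
    and "\<And>z. (\<lambda>s. indicator {0..pi} s *\<^sub>R g (z, s)) \<in> borel_measurable lborel"
    and "AE p in lborel. p \<in> fdom \<longrightarrow> f p = g p"
  shows "AE p in lborel. fibre_avg f p = fibre_avg g p"
  using AE_lborel_fst[OF fibre_integral_cong_AE[OF assms]]
  by eventually_elim (simp add: fibre_avg_def)

lemma fibre_mean_sq_le: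
  fixes u :: "real \<Rightarrow> complex"
  assumes [measurable]: "u \<in> borel_measurable lborel"
  shows "ennreal (pi * (cmod ((LINT s:{0..pi}|lborel. u s) / pi))\<^sup>2)
     \<le> (\<integral>\<^sup>+t. indicator {0..pi} t * ennreal ((cmod (u t))\<^sup>2) \<partial>lborel)"
proof -
  define I where "I = (LINT s:{0..pi}|lborel. u s)"
  define A where "A = (\<integral>\<^sup>+t. indicator {0..pi} t * ennreal ((cmod (u t))\<^sup>2) \<partial>lborel)"
  have I1: "ennreal (cmod I) \<le> (\<integral>\<^sup>+t. ennreal (indicator {0..pi} t * cmod (u t)) * indicator {0..pi} t \<partial>lborel)"
  proof (cases "set_integrable lborel {0..pi} u")
    case True
    have "ennreal (cmod I) \<le> (\<integral>\<^sup>+t. norm (indicator {0..pi} t *\<^sub>R u t) \<partial>lborel)"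
      unfolding I_def set_lebesgue_integral_def
      using True unfolding set_integrable_def by (intro integral_norm_bound_ennreal)
    also have "\<dots> = (\<integral>\<^sup>+t. ennreal (indicator {0..pi} t * cmod (u t)) * indicator {0..pi} t \<partial>lborel)"
      by (intro nn_integral_cong) (auto simp: indicator_def)
    finally show ?thesis .
  next
    case False
    then have "I = 0" unfolding I_def set_lebesgue_integral_def set_integrable_def
      by (rule not_integrable_integral_eq)
    then show ?thesis by simp
  qed
  have "(\<integral>\<^sup>+t. ennreal (indicator {0..pi} t * cmod (u t)) * indicator {0..pi} t \<partial>lborel)\<^sup>2
     \<le> (\<integral>\<^sup>+t. (ennreal (indicator {0..pi} t * cmod (u t)))\<^sup>2 \<partial>lborel) * (\<integral>\<^sup>+t. (indicator {0..pi} t)\<^sup>2 \<partial>lborel)"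
    by (rule Cauchy_Schwarz_nn_integral) measurable
  also have "(\<integral>\<^sup>+t. (ennreal (indicator {0..pi} t * cmod (u t)))\<^sup>2 \<partial>lborel) = A"
    unfolding A_def by (intro nn_integral_cong) (auto simp: indicator_def ennreal_power)
  also have "(\<integral>\<^sup>+t. (indicator {0..pi} t)\<^sup>2 \<partial>lborel) = ennreal pi"
    by (subst nn_integral_cong[of _ _ "indicator {0..pi}"]) (auto simp: indicator_def)
  finally have "ennreal ((cmod I)\<^sup>2) \<le> A * ennreal pi"
    using power_mono[OF I1, of 2] by (simp add: ennreal_power)
  show ?thesis
  proof (cases "A = \<infinity>")
    case True then show ?thesis unfolding A_def[symmetric] by simp
  next
    case False
    then obtain a where a: "A = ennreal a" "0 \<le> a" by (cases A) auto
    have "(cmod I)\<^sup>2 \<le> a * pi" using \<open>ennreal ((cmod I)\<^sup>2) \<le> A * ennreal pi\<close> a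
      by (simp add: ennreal_mult[symmetric])
    then have "pi * (cmod (I / pi))\<^sup>2 \<le> a"
      by (simp add: norm_divide power_divide field_simps power2_eq_square)
    then show ?thesis unfolding A_def[symmetric] I_def[symmetric] using a by (simp add: ennreal_leI)
  qed
qed

lemma L2sq_fibre_avg_le:
  assumes [measurable]: "f \<in> borel_measurable lborel"
  shows "L2sq (fibre_avg f) \<le> L2sq f"
proof -
  have "L2sq (fibre_avg f) = (\<integral>\<^sup>+z. (\<integral>\<^sup>+t. indicator {0..pi} t * ennreal ((cmod (fibre_avg f (z, t)))\<^sup>2) \<partial>lborel) \<partial>lborel)"
    by (rule L2sq_fibres) measurable
  also have "\<dots> = (\<integral>\<^sup>+z. ennreal (pi * (cmod ((LINT s:{0..pi}|lborel. f (z, s)) / pi))\<^sup>2) \<partial>lborel)"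
  proof (intro nn_integral_cong)
    fix z
    have "(\<integral>\<^sup>+t. indicator {0..pi} t * ennreal ((cmod (fibre_avg f (z, t)))\<^sup>2) \<partial>lborel)
       = (\<integral>\<^sup>+t. ennreal ((cmod (fibre_avg f (z, 0)))\<^sup>2) * indicator {0..pi} t \<partial>lborel)"
      by (intro nn_integral_cong) (simp add: fibre_avg_def mult.commute)
    also have "\<dots> = ennreal ((cmod (fibre_avg f (z, 0)))\<^sup>2) * ennreal pi"
      by (subst nn_integral_cmult_indicator) auto
    finally show "(\<integral>\<^sup>+t. indicator {0..pi} t * ennreal ((cmod (fibre_avg f (z, t)))\<^sup>2) \<partial>lborel)
       = ennreal (pi * (cmod ((LINT s:{0..pi}|lborel. f (z, s)) / pi))\<^sup>2)"
      by (simp add: fibre_avg_def ennreal_mult[symmetric] mult.commute)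
  qed
  also have "\<dots> \<le> (\<integral>\<^sup>+z. (\<integral>\<^sup>+t. indicator {0..pi} t * ennreal ((cmod (f (z, t)))\<^sup>2) \<partial>lborel) \<partial>lborel)"
    by (intro nn_integral_mono fibre_mean_sq_le) (use assms in \<open>simp add: lborel_prod[symmetric]\<close>)
  also have "\<dots> = L2sq f" by (rule L2sq_fibres[symmetric]) simp
  finally show ?thesis .
qed

lemma L2C_fibre_avg:
  assumes "f \<in> L2C"
  shows "AE p in lborel. p \<in> fdom \<longrightarrow> fibre_avg f p = f p"
proof -
  obtain h where f: "f \<in> L2H" and h: "AE p in lborel. p \<in> fdom \<longrightarrow> f p = h (fst p)"
    using assms by (auto simp: L2C_def ae_eq_def)
  have "f \<in> borel_measurable lborel" using f by (simp add: L2H_iff_L2sq)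
  then have "AE p in lborel. fibre_avg f p = fibre_avg (\<lambda>p. h (fst p)) p"
    by (intro fibre_avg_cong_AE[OF fibre_measurable _ h] borel_measurable_scaleR borel_measurable_indicator)
       simp_all
  with h show ?thesis
    by eventually_elim (simp add: fibre_avg_fst)
qed

lemma L2zero_fibre_avg:
  assumes "f \<in> L2zero"
  shows "AE p in lborel. fibre_avg f p = 0"
  using AE_lborel_fst[of "\<lambda>z. (LINT t:{0..pi}|lborel. f (z, t)) = 0"] assms
  by (auto simp: L2zero_def fibre_avg_def elim!: eventually_mono)

definition L2_closure :: "(hpt \<Rightarrow> complex) set \<Rightarrow> (hpt \<Rightarrow> complex) set" where
  "L2_closure D = {f. \<forall>e>0. \<exists>g\<in>D. L2sq (\<lambda>p. f p - g p) < ennreal e}"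

lemma L2_closure_mono: "D \<subseteq> E \<Longrightarrow> L2_closure D \<subseteq> L2_closure E"
  unfolding L2_closure_def by blast

lemma L2C_closed:
  assumes "f \<in> L2H" "f \<in> L2_closure L2C"
  shows "f \<in> L2C"
proof -
  have [measurable]: "f \<in> borel_measurable lborel" using assms(1) by (simp add: L2H_iff_L2sq)
  have "L2sq (\<lambda>p. f p - fibre_avg f p) < ennreal e" if "0 < e" for e
  proof -
    have "0 < e / 4" using \<open>0 < e\<close> by simp
    then obtain g where g: "g \<in> L2C" "L2sq (\<lambda>p. f p - g p) < ennreal (e / 4)"
      using assms(2) unfolding L2_closure_def by blast
    have gL: "g \<in> L2H" and [measurable]: "g \<in> borel_measurable lborel"
      using g(1) by (auto simp: L2C_def L2H_iff_L2sq)
    have "L2sq (\<lambda>p. g p - fibre_avg f p) = L2sq (fibre_avg (\<lambda>p. g p - f p))"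
      using L2C_fibre_avg[OF g(1)] fibre_avg_diff[OF L2H_fibre_integrable[OF gL] L2H_fibre_integrable[OF assms(1)]]
      by (intro L2sq_cong_AE) (auto elim: eventually_elim2)
    also have "\<dots> \<le> L2sq (\<lambda>p. g p - f p)" by (rule L2sq_fibre_avg_le) measurable
    also have "\<dots> = L2sq (\<lambda>p. f p - g p)" by (rule L2sq_diff_commute)
    finally have gPf: "L2sq (\<lambda>p. g p - fibre_avg f p) \<le> L2sq (\<lambda>p. f p - g p)" .
    have "L2sq (\<lambda>p. f p - fibre_avg f p)
        \<le> 2 * L2sq (\<lambda>p. f p - g p) + 2 * L2sq (\<lambda>p. g p - fibre_avg f p)"
      by (rule L2sq_triangle) measurable
    also have "\<dots> \<le> 2 * L2sq (\<lambda>p. f p - g p) + 2 * L2sq (\<lambda>p. f p - g p)"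
      by (intro add_left_mono mult_left_mono gPf) simp
    also have "\<dots> = ennreal 4 * L2sq (\<lambda>p. f p - g p)"
      by (simp add: distrib_right[symmetric])
    also have "\<dots> < ennreal e" by (rule ennreal_mult_less_if_less_divide[OF g(2)]) simp
    finally show ?thesis .
  qed
  then have "L2sq (\<lambda>p. f p - fibre_avg f p) = 0" by (rule ennreal_eq_0_if_less_all)
  then have "AE p in lborel. p \<in> fdom \<longrightarrow> f p - fibre_avg f p = 0"
    by (subst (asm) L2sq_eq_0_iff) measurable
  then have "ae_eq f (\<lambda>p. (\<lambda>z. fibre_avg f (z, 0)) (fst p))"
    unfolding ae_eq_def by eventually_elim (simp add: fibre_avg_def)
  then show ?thesis using assms(1) unfolding L2C_def by (auto intro!: exI[of _ "\<lambda>z. fibre_avg f (z, 0)"])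
qed

lemma L2zero_closed:
  assumes "f \<in> L2H" "f \<in> L2_closure L2zero"
  shows "f \<in> L2zero"
proof -
  have [measurable]: "f \<in> borel_measurable lborel" using assms(1) by (simp add: L2H_iff_L2sq)
  have "L2sq (fibre_avg f) < ennreal e" if "0 < e" for e
  proof -
    obtain g where g: "g \<in> L2zero" "L2sq (\<lambda>p. f p - g p) < ennreal e"
      using assms(2) \<open>0 < e\<close> unfolding L2_closure_def by blast
    have gL: "g \<in> L2H" and [measurable]: "g \<in> borel_measurable lborel"
      using g(1) by (auto simp: L2zero_def L2H_iff_L2sq)
    have "L2sq (fibre_avg f) = L2sq (fibre_avg (\<lambda>p. f p - g p))"
      using L2zero_fibre_avg[OF g(1)] fibre_avg_diff[OF L2H_fibre_integrable[OF assms(1)] L2H_fibre_integrable[OF gL]]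
      by (intro L2sq_cong_AE) (auto elim: eventually_elim2)
    also have "\<dots> \<le> L2sq (\<lambda>p. f p - g p)" by (rule L2sq_fibre_avg_le) measurable
    finally show ?thesis using g(2) by simp
  qed
  then have "L2sq (fibre_avg f) = 0" by (rule ennreal_eq_0_if_less_all)
  then have "AE p in lborel. p \<in> fdom \<longrightarrow> fibre_avg f p = 0"
    by (subst (asm) L2sq_eq_0_iff) measurable
  then have "AE z in lborel. fibre_avg f (z, 0) = 0"
    by (intro AE_fst_if_AE_fdom) (auto simp: fibre_avg_def elim!: eventually_mono)
  then show ?thesis
    using assms(1) unfolding L2zero_def by (auto simp: fibre_avg_def elim!: eventually_mono)
qed

lemma L2_closure_image:
  assumes lip: "\<And>f g. f \<in> L2H \<Longrightarrow> g \<in> L2H \<Longrightarrow> L2sq (\<lambda>p. T f p - T g p) \<le> ennreal C * L2sq (\<lambda>p. f p - g p)"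
    and "0 \<le> C" "D \<subseteq> L2H" "f \<in> L2H" "f \<in> L2_closure D"
  shows "T f \<in> L2_closure (T ` D)"
  unfolding L2_closure_def
proof (intro CollectI allI impI)
  fix e :: real assume "0 < e"
  then have "0 < e / (C + 1)" using \<open>0 \<le> C\<close> by simp
  then obtain g where g: "g \<in> D" "L2sq (\<lambda>p. f p - g p) < ennreal (e / (C + 1))"
    using assms(5) unfolding L2_closure_def by blast
  have "L2sq (\<lambda>p. T f p - T g p) \<le> ennreal C * L2sq (\<lambda>p. f p - g p)"
    using lip assms(3,4) g(1) by blast
  also have "\<dots> \<le> ennreal (C + 1) * L2sq (\<lambda>p. f p - g p)"
    by (intro mult_right_mono ennreal_leI) auto
  also have "\<dots> < ennreal e"
    by (rule ennreal_mult_less_if_less_divide[OF g(2)]) (use \<open>0 \<le> C\<close> in simp)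
  finally show "\<exists>h\<in>T ` D. L2sq (\<lambda>p. T f p - h p) < ennreal e"
    using g(1) by blast
qed

lemma bounded_ext_xray_L2sq_lipschitz:
  assumes "bounded_ext_xray a b T"
  obtains C where "0 \<le> C"
    "\<And>f g. f \<in> L2H \<Longrightarrow> g \<in> L2H \<Longrightarrow> L2sq (\<lambda>p. T f p - T g p) \<le> ennreal C * L2sq (\<lambda>p. f p - g p)"
proof -
  from assms obtain C where TL: "\<And>f. f \<in> L2H \<Longrightarrow> T f \<in> L2H"
    and lin: "\<And>f g c. f \<in> L2H \<Longrightarrow> g \<in> L2H \<Longrightarrow> ae_eq (T (\<lambda>p. f p + c * g p)) (\<lambda>p. T f p + c * T g p)"
    and bound: "\<And>f. f \<in> L2H \<Longrightarrow> L2norm (T f) \<le> C * L2norm f"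
    unfolding bounded_ext_xray_def by blast
  show ?thesis
  proof (rule that[of "(max C 0)\<^sup>2"])
    fix f g assume f: "f \<in> L2H" and g: "g \<in> L2H"
    define d where "d = (\<lambda>p. f p - g p)"
    have d: "d \<in> L2H" unfolding d_def by (rule L2H_diff[OF f g])
    have "(\<lambda>p. g p + 1 * d p) = f" by (auto simp: d_def)
    then have "ae_eq (T f) (\<lambda>p. T g p + 1 * T d p)"
      using lin[OF g d, of 1] by simp
    then have "L2sq (\<lambda>p. T f p - T g p) = L2sq (T d)"
      unfolding ae_eq_def by (intro L2sq_cong_AE) (auto elim!: eventually_mono)
    also have "\<dots> = ennreal ((L2norm (T d))\<^sup>2)"
      using L2sq_L2norm TL d by blast
    also have "\<dots> \<le> ennreal ((max C 0 * L2norm d)\<^sup>2)"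
    proof (intro ennreal_leI power_mono)
      show "L2norm (T d) \<le> max C 0 * L2norm d"
        using bound[OF d] mult_right_mono[OF max.cobounded1 L2norm_nonneg] by (rule order_trans)
    qed (rule L2norm_nonneg)
    also have "\<dots> = ennreal ((max C 0)\<^sup>2) * L2sq d"
      using L2sq_L2norm[OF d] by (simp add: ennreal_mult power_mult_distrib)
    finally show "L2sq (\<lambda>p. T f p - T g p) \<le> ennreal ((max C 0)\<^sup>2) * L2sq (\<lambda>p. f p - g p)"
      unfolding d_def .
  qed simp
qed

section \<open>Density of smooth test functions\<close>

lemma L2sq_triangle_less:
  assumes "f \<in> borel_measurable lborel" "g \<in> borel_measurable lborel" "h \<in> borel_measurable lborel"
    and "L2sq (\<lambda>p. f p - g p) < ennreal (e / 4)" "L2sq (\<lambda>p. g p - h p) < ennreal (e / 4)"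
  shows "L2sq (\<lambda>p. f p - h p) < ennreal e"
proof -
  have "L2sq (\<lambda>p. f p - h p) \<le> 2 * L2sq (\<lambda>p. f p - g p) + 2 * L2sq (\<lambda>p. g p - h p)"
    using L2sq_triangle[OF assms(1-3)] .
  also have "\<dots> < 2 * ennreal (e / 4) + 2 * ennreal (e / 4)"
    using assms(4,5) by (intro add_strict_mono ennreal_mult_strict_left_mono) auto
  also have "\<dots> = ennreal e"
  proof -
    have "0 < e" using le_less_trans[OF zero_le assms(4)] by simp
    then have "2 * ennreal (e / 4) = ennreal (e / 2)" "ennreal (e / 2) + ennreal (e / 2) = ennreal e"
      using ennreal_mult[of 2 "e / 4"] ennreal_plus[of "e / 2" "e / 2"] by simp_all
    then show ?thesis by simp
  qed
  finally show ?thesis .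
qed

lemma L2sq_dominated_convergence:
  fixes s :: "nat \<Rightarrow> hpt \<Rightarrow> complex"
  assumes [measurable]: "\<And>i. s i \<in> borel_measurable lborel" "f \<in> borel_measurable lborel"
    "w \<in> borel_measurable lborel"
    and "(\<integral>\<^sup>+p. indicator fdom p * ennreal (w p) \<partial>lborel) < \<infinity>"
    and bound: "\<And>i. AE p in lborel. p \<in> fdom \<longrightarrow> (cmod (f p - s i p))\<^sup>2 \<le> w p"
    and conv: "AE p in lborel. p \<in> fdom \<longrightarrow> (\<lambda>i. s i p) \<longlonglongrightarrow> f p"
    and "0 < e"
  shows "\<exists>i. L2sq (\<lambda>p. f p - s i p) < ennreal e"
proof -
  define u where "u = (\<lambda>i p. indicator fdom p * ennreal ((cmod (f p - s i p))\<^sup>2))"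
  define W where "W = (\<lambda>p. indicator fdom p * ennreal (w p))"
  have um: "u i \<in> borel_measurable lborel" for i
    unfolding u_def by measurable
  have Wm: "W \<in> borel_measurable lborel"
    unfolding W_def by measurable
  have uW: "AE p in lborel. u i p \<le> W p" for i
    using bound[of i] by eventually_elim (auto simp: u_def W_def indicator_def ennreal_leI)
  have Wfin: "integral\<^sup>N lborel W < \<infinity>" using assms(4) by (simp add: W_def)
  have u0: "AE p in lborel. (\<lambda>i. u i p) \<longlonglongrightarrow> 0"
    using conv
  proof eventually_elim
    case (elim p)
    show ?case
    proof (cases "p \<in> fdom")
      case True
      then have "(\<lambda>i. f p - s i p) \<longlonglongrightarrow> 0"
        using elim tendsto_diff[OF tendsto_const, of "\<lambda>i. s i p" "f p" sequentially "f p"] by simp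
      then have "(\<lambda>i. (cmod (f p - s i p))\<^sup>2) \<longlonglongrightarrow> 0"
        using tendsto_power[OF tendsto_norm_zero, of _ _ 2] by force
      then have "(\<lambda>i. ennreal ((cmod (f p - s i p))\<^sup>2)) \<longlonglongrightarrow> ennreal 0"
        by (rule tendsto_ennrealI)
      then show ?thesis using True by (simp add: u_def)
    qed (simp add: u_def)
  qed
  have "(\<lambda>i. integral\<^sup>N lborel (u i)) \<longlonglongrightarrow> integral\<^sup>N lborel (\<lambda>p. 0)"
    using nn_integral_dominated_convergence[of u lborel "\<lambda>p. 0" W, OF um _ Wm uW Wfin u0] by simp
  then have "(\<lambda>i. L2sq (\<lambda>p. f p - s i p)) \<longlonglongrightarrow> 0"
    by (simp add: u_def L2sq_def)
  from order_tendstoD(2)[OF this, of "ennreal e"] \<open>0 < e\<close>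
  have "eventually (\<lambda>i. L2sq (\<lambda>p. f p - s i p) < ennreal e) sequentially" by simp
  then show ?thesis by (auto simp: eventually_sequentially)
qed

definition clip :: "real \<Rightarrow> complex \<Rightarrow> complex" where
  "clip k w = Complex (max (- k) (min k (Re w))) (max (- k) (min k (Im w)))"

lemma continuous_on_clip: "continuous_on A (clip k)"
  unfolding clip_def by (intro continuous_intros continuous_on_Complex)

lemma norm_clip_le:
  assumes "0 \<le> k" shows "cmod (clip k w) \<le> cmod w"
proof -
  have "\<bar>max (- k) (min k x)\<bar> \<le> \<bar>x\<bar>" for x using assms by auto
  then have "(cmod (clip k w))\<^sup>2 \<le> (cmod w)\<^sup>2"
    unfolding cmod_power2 clip_def by (simp add: add_mono power_mono abs_le_square_iff)
  then show ?thesis by (simp add: abs_le_square_iff[symmetric])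
qed

lemma norm_clip_le_2k:
  assumes "0 \<le> k" shows "cmod (clip k w) \<le> 2 * k"
proof -
  have "cmod (clip k w) \<le> \<bar>Re (clip k w)\<bar> + \<bar>Im (clip k w)\<bar>" by (rule cmod_le)
  also have "\<dots> \<le> k + k" using assms by (auto simp: clip_def)
  finally show ?thesis by simp
qed

lemma clip_eq: "\<bar>Re w\<bar> \<le> k \<Longrightarrow> \<bar>Im w\<bar> \<le> k \<Longrightarrow> clip k w = w"
  by (auto simp: clip_def complex_eq_iff)

text \<open>\<open>trunc k\<close> vanishes for \<open>|z| \<ge> k\<close> and at \<open>t = 0\<close> and \<open>t = pi\<close>, so truncated functions stay
  continuous across the identification of the two ends of the fundamental domain.\<close>

definition trunc :: "real \<Rightarrow> hpt \<Rightarrow> complex" where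
  "trunc k p = complex_of_real (max 0 (min 1 (k - cmod (fst p)))
     * max 0 (min 1 (min (k * snd p) (k * (pi - snd p)))))"

lemma continuous_on_trunc: "continuous_on A (trunc k)"
  unfolding trunc_def by (intro continuous_intros)

lemma norm_trunc_le_1: "cmod (trunc k p) \<le> 1"
  unfolding trunc_def norm_of_real by (auto simp: abs_mult intro!: mult_le_one)

lemma trunc_eq_0: "k \<le> cmod (fst p) \<Longrightarrow> trunc k p = 0"
  by (simp add: trunc_def)

lemma trunc_ends: "0 \<le> k \<Longrightarrow> trunc k (z, 0) = 0" "0 \<le> k \<Longrightarrow> trunc k (z, pi) = 0"
  by (auto simp: trunc_def)

lemma trunc_eq_1:
  assumes "cmod (fst p) + 1 \<le> k" "0 < snd p" "snd p < pi" "1 / snd p \<le> k" "1 / (pi - snd p) \<le> k"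
  shows "trunc k p = 1"
proof -
  have "1 \<le> k * snd p" using assms(2,4) by (simp add: field_simps)
  moreover have "1 \<le> k * (pi - snd p)" using assms(3,5) by (simp add: field_simps)
  ultimately show ?thesis using assms(1) by (simp add: trunc_def)
qed

lemma clip_trunc_measurable [measurable]:
  assumes [measurable]: "f \<in> borel_measurable lborel"
  shows "(\<lambda>p. clip k (f p) * trunc k p) \<in> borel_measurable lborel"
proof -
  have "trunc k \<in> borel_measurable lborel"
    using borel_measurable_continuous_onI[OF continuous_on_trunc] by simp
  then show ?thesis
    by (intro borel_measurable_times borel_measurable_continuous_on[OF continuous_on_clip] assms)
qed

lemma AE_snd_neq_0: "AE p in (lborel::hpt measure). snd p \<noteq> 0"
proof -
  have "UNIV \<times> {0} \<in> null_sets ((lborel::complex measure) \<Otimes>\<^sub>M (lborel::real measure))"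
    by (intro lborel.times_in_null_sets2) auto
  then have "UNIV \<times> {0} \<in> null_sets (lborel::hpt measure)" by (simp add: lborel_prod)
  then show ?thesis by (rule AE_I') auto
qed

lemma truncation_approx:
  assumes [measurable]: "f \<in> borel_measurable lborel" and "L2sq f < \<infinity>" "0 < e"
  shows "\<exists>n::nat. L2sq (\<lambda>p. f p - clip n (f p) * trunc n p) < ennreal e"
proof (rule L2sq_dominated_convergence[where w="\<lambda>p. 4 * (cmod (f p))\<^sup>2"])
  have "(\<integral>\<^sup>+p. indicator fdom p * ennreal (4 * (cmod (f p))\<^sup>2) \<partial>lborel) = 4 * L2sq f"
    unfolding L2sq_def
    by (subst nn_integral_cmult[symmetric]) (auto intro!: nn_integral_cong simp: ennreal_mult mult_ac)
  then show "(\<integral>\<^sup>+p. indicator fdom p * ennreal (4 * (cmod (f p))\<^sup>2) \<partial>lborel) < \<infinity>"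
    using assms(2) by (simp add: ennreal_mult_less_top)
  show "AE p in lborel. p \<in> fdom \<longrightarrow> (cmod (f p - clip (real n) (f p) * trunc (real n) p))\<^sup>2 \<le> 4 * (cmod (f p))\<^sup>2" for n
  proof (intro AE_I2 impI)
    fix p
    have "cmod (clip (real n) (f p) * trunc (real n) p) \<le> cmod (f p) * 1"
      unfolding norm_mult by (intro mult_mono norm_clip_le norm_trunc_le_1) auto
    then have "cmod (f p - clip (real n) (f p) * trunc (real n) p) \<le> 2 * cmod (f p)"
      using norm_triangle_ineq4[of "f p" "clip (real n) (f p) * trunc (real n) p"] by linarith
    then have "(cmod (f p - clip (real n) (f p) * trunc (real n) p))\<^sup>2 \<le> (2 * cmod (f p))\<^sup>2"
      by (intro power_mono) auto
    then show "(cmod (f p - clip (real n) (f p) * trunc (real n) p))\<^sup>2 \<le> 4 * (cmod (f p))\<^sup>2"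
      by (simp add: power_mult_distrib)
  qed
  show "AE p in lborel. p \<in> fdom \<longrightarrow> (\<lambda>n. clip (real n) (f p) * trunc (real n) p) \<longlonglongrightarrow> f p"
    using AE_snd_neq_0
  proof (eventually_elim, intro impI)
    case (elim p)
    assume "p \<in> fdom"
    then have t: "0 < snd p" "snd p < pi" using elim by (auto simp: fdom_def)
    define K where "K = max (max (cmod (fst p) + 1) (max (1 / snd p) (1 / (pi - snd p))))
      (max \<bar>Re (f p)\<bar> \<bar>Im (f p)\<bar>)"
    obtain N :: nat where N: "K \<le> real N" using real_arch_simple by blast
    have "clip (real n) (f p) * trunc (real n) p = f p" if "N \<le> n" for n
    proof -
      have "K \<le> real n" using N that by linarith
      then have "trunc (real n) p = 1" "clip (real n) (f p) = f p"
        using t by (auto simp: K_def intro!: trunc_eq_1 clip_eq)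
      then show ?thesis by simp
    qed
    then show "(\<lambda>n. clip (real n) (f p) * trunc (real n) p) \<longlonglongrightarrow> f p"
      by (intro tendsto_eventually) (auto simp: eventually_sequentially)
  qed
qed (use assms in simp_all)

lemma norm_clip_trunc_diff_sq_le:
  assumes "0 \<le> k"
  shows "(cmod (clip k x * trunc k p - clip k y * trunc k p))\<^sup>2
    \<le> 16 * k\<^sup>2 * indicator (cball (0::complex) k \<times> UNIV) p"
proof (cases "cmod (fst p) < k")
  case True
  have "cmod (clip k x * trunc k p) \<le> 2 * k * 1" "cmod (clip k y * trunc k p) \<le> 2 * k * 1"
    unfolding norm_mult using assms by (intro mult_mono norm_clip_le_2k norm_trunc_le_1; simp)+
  then have "cmod (clip k x * trunc k p - clip k y * trunc k p) \<le> 4 * k"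
    using norm_triangle_ineq4[of "clip k x * trunc k p" "clip k y * trunc k p"] by linarith
  then have "(cmod (clip k x * trunc k p - clip k y * trunc k p))\<^sup>2 \<le> (4 * k)\<^sup>2"
    by (intro power_mono) auto
  moreover have "p \<in> cball 0 k \<times> UNIV" using True by (cases p) auto
  ultimately show ?thesis by (simp add: power_mult_distrib)
qed (simp add: trunc_eq_0)

lemma continuous_approx_truncation:
  assumes [measurable]: "f \<in> borel_measurable lborel" and "0 < e" "0 \<le> k"
  shows "\<exists>g. continuous_on UNIV g \<and> (\<forall>z. g (z, pi) = g (z, 0)) \<and> (\<forall>z t. k \<le> cmod z \<longrightarrow> g (z, t) = 0)
     \<and> L2sq (\<lambda>p. clip k (f p) * trunc k p - g p) < ennreal e"
proof -
  have "f \<in> borel_measurable lebesgue" by (rule measurable_completion) simp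
  then have "f measurable_on UNIV"
    by (rule lebesgue_measurable_imp_measurable_on) simp
  then obtain N \<phi> where N: "negligible N" and \<phi>: "\<And>j. continuous_on UNIV (\<phi> j)"
    and \<phi>_lim: "\<And>x. x \<notin> N \<Longrightarrow> (\<lambda>j. \<phi> j x) \<longlonglongrightarrow> f x"
    unfolding measurable_on_def by auto
  have "AE x in lebesgue. x \<notin> N"
    using N by (intro AE_not_in) (simp add: negligible_iff_null_sets)
  then have "AE x in lborel. x \<notin> N" by (simp add: AE_completion_iff)
  define s where "s j p = clip k (\<phi> j p) * trunc k p" for j p
  have s: "continuous_on UNIV (s j)" for j
    unfolding s_def
    by (intro continuous_intros continuous_on_compose2[OF continuous_on_clip \<phi>] continuous_on_trunc) auto
  define w where "w p = 16 * k\<^sup>2 * indicator (cball (0::complex) k \<times> UNIV) p" for p :: hpt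
  have "\<exists>j. L2sq (\<lambda>p. clip k (f p) * trunc k p - s j p) < ennreal e"
  proof (rule L2sq_dominated_convergence[where w=w])
    show "s j \<in> borel_measurable lborel" for j by (rule continuous_imp_measurable_lborel[OF s])
    have "cball (0::complex) k \<times> UNIV \<in> sets (lborel::hpt measure)"
      by (intro Times_in_sets_lborel) auto
    then show "w \<in> borel_measurable lborel" unfolding w_def by measurable
    have "(\<integral>\<^sup>+p. indicator fdom p * ennreal (w p) \<partial>lborel)
        = (\<integral>\<^sup>+p. ennreal (16 * k\<^sup>2) * indicator (cball (0::complex) k \<times> {0..<pi}) p \<partial>lborel)"
      by (intro nn_integral_cong) (auto simp: w_def fdom_def indicator_def)
    also have "\<dots> = ennreal (16 * k\<^sup>2) * emeasure lborel (cball (0::complex) k \<times> {0..<pi})"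
      by (intro nn_integral_cmult_indicator Times_in_sets_lborel) auto
    also have "\<dots> < \<infinity>"
      using emeasure_cball_strip_finite by (simp add: ennreal_mult_less_top)
    finally show "(\<integral>\<^sup>+p. indicator fdom p * ennreal (w p) \<partial>lborel) < \<infinity>" .
    show "AE p in lborel. p \<in> fdom \<longrightarrow> (cmod (clip k (f p) * trunc k p - s j p))\<^sup>2 \<le> w p" for j
      using norm_clip_trunc_diff_sq_le[OF \<open>0 \<le> k\<close>] by (simp add: s_def w_def)
    show "AE p in lborel. p \<in> fdom \<longrightarrow> (\<lambda>j. s j p) \<longlonglongrightarrow> clip k (f p) * trunc k p"
      using \<open>AE x in lborel. x \<notin> N\<close>
    proof eventually_elim
      case (elim p)
      have "(\<lambda>j. clip k (\<phi> j p)) \<longlonglongrightarrow> clip k (f p)"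
        by (rule isCont_tendsto_compose[OF _ \<phi>_lim[OF elim]])
           (use continuous_on_clip[of UNIV k] in \<open>simp add: continuous_on_eq_continuous_at\<close>)
      then show ?case by (simp add: s_def tendsto_mult_right)
    qed
  qed (use assms in simp_all)
  then obtain j where "L2sq (\<lambda>p. clip k (f p) * trunc k p - s j p) < ennreal e" by blast
  moreover have "s j (z, pi) = s j (z, 0)" for z using trunc_ends[OF \<open>0 \<le> k\<close>] by (simp add: s_def)
  moreover have "s j (z, t) = 0" if "k \<le> cmod z" for z t using trunc_eq_0[of k "(z, t)"] that by (simp add: s_def)
  ultimately show ?thesis using s by blast
qed

lemma continuous_approx:
  assumes [measurable]: "f \<in> borel_measurable lborel" and "L2sq f < \<infinity>" "0 < e"
  shows "\<exists>g R. continuous_on UNIV g \<and> (\<forall>z. g (z, pi) = g (z, 0)) \<and> (\<forall>z t. R \<le> cmod z \<longrightarrow> g (z, t) = 0)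
     \<and> L2sq (\<lambda>p. f p - g p) < ennreal e"
proof -
  have "0 < e / 4" using \<open>0 < e\<close> by simp
  obtain n :: nat where n: "L2sq (\<lambda>p. f p - clip n (f p) * trunc n p) < ennreal (e / 4)"
    using truncation_approx[OF assms(1,2) \<open>0 < e / 4\<close>] by blast
  obtain g where g: "continuous_on UNIV g" "\<forall>z. g (z, pi) = g (z, 0)" "\<forall>z t. real n \<le> cmod z \<longrightarrow> g (z, t) = 0"
     "L2sq (\<lambda>p. clip n (f p) * trunc n p - g p) < ennreal (e / 4)"
    using continuous_approx_truncation[OF assms(1) \<open>0 < e / 4\<close>, of n] by auto
  have "L2sq (\<lambda>p. f p - g p) < ennreal e"
    by (rule L2sq_triangle_less[OF _ _ continuous_imp_measurable_lborel[OF g(1)] n g(4)]) measurable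
  then show ?thesis using g by blast
qed

lemma continuous_on_quotient:
  fixes f :: "'a::euclidean_space \<Rightarrow> 'b::euclidean_space" and g :: "'b \<Rightarrow> 'c::euclidean_space"
  assumes "compact S" "continuous_on S f" "continuous_on S (\<lambda>x. g (f x))"
  shows "continuous_on (f ` S) g"
proof -
  have q: "quotient_map (top_of_set S) (top_of_set (f ` S)) f"
    unfolding quotient_map_def
  proof (intro conjI allI impI)
    show "f ` topspace (top_of_set S) = topspace (top_of_set (f ` S))" by simp
    fix U assume "U \<subseteq> topspace (top_of_set (f ` S))"
    then have U: "U \<subseteq> f ` S" by simp
    have "{x \<in> topspace (top_of_set S). f x \<in> U} = S \<inter> f -` U" by auto
    then show "openin (top_of_set S) {x \<in> topspace (top_of_set S). f x \<in> U} = openin (top_of_set (f ` S)) U"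
      using Abstract_Topology_2.continuous_imp_quotient_map[OF assms(2) refl assms(1) U] by simp
  qed
  have "continuous_map (top_of_set S) euclidean (g \<circ> f)"
    using assms(3) by (simp add: o_def)
  then have "continuous_map (top_of_set (f ` S)) euclidean g"
    by (rule continuous_compose_quotient_map[OF q])
  then show ?thesis by simp
qed

lemma cis_double_eq_cases:
  assumes "t0 \<in> {0..pi}" "t1 \<in> {0..pi}" "cis (2 * t0) = cis (2 * t1)"
  shows "t0 = t1 \<or> (t0 \<in> {0, pi} \<and> t1 \<in> {0, pi})"
proof -
  have "exp (\<i> * complex_of_real (2 * t0)) = exp (\<i> * complex_of_real (2 * t1))"
    using assms(3) by (simp add: cis_conv_exp)
  then obtain n :: int where "\<i> * complex_of_real (2 * t0) = \<i> * complex_of_real (2 * t1) + (of_int (2 * n) * pi) * \<i>"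
    unfolding exp_eq by blast
  then have d: "t0 - t1 = n * pi"
    by (simp add: complex_eq_iff)
  have "\<bar>t0 - t1\<bar> \<le> pi" using assms(1,2) by auto
  then have "\<bar>real_of_int n\<bar> * pi \<le> pi" by (simp add: d abs_mult)
  then have "\<bar>real_of_int n\<bar> \<le> 1" by simp
  then have "n = 0 \<or> n = 1 \<or> n = -1" by linarith
  then show ?thesis
  proof (elim disjE)
    assume "n = 1" then have "t0 = t1 + pi" using d by simp
    then show ?thesis using assms(1,2) by auto
  next
    assume "n = -1" then have "t1 = t0 + pi" using d by simp
    then show ?thesis using assms(1,2) by auto
  qed (use d in simp)
qed

definition cutoff :: "real \<Rightarrow> hpt \<Rightarrow> complex" where
  "cutoff c p = complex_of_real (flat (c - (cmod (fst p))\<^sup>2))"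

lemma elementary_cutoff: "elementary (cutoff c)"
proof -
  have "elementary (\<lambda>p. complex_of_real (flat (Re ((\<lambda>p. complex_of_real c
      + (- 1) * (complex_of_real (Re (fst p)) * complex_of_real (Re (fst p)))
      + (- 1) * (complex_of_real (Im (fst p)) * complex_of_real (Im (fst p)))) p))))"
    by (intro elementary.smooth_comp smooth_real_flat elementary.add elementary.mult
        elementary.const elementary.Re_fst elementary.Im_fst)
  then show ?thesis unfolding cutoff_def cmod_power2 by (simp add: power2_eq_square diff_diff_eq)
qed

lemma norm_cutoff_le_1: "cmod (cutoff c p) \<le> 1"
  by (simp add: cutoff_def flat_le_1 flat_nonneg)

lemma cutoff_eq_0: "c \<le> (cmod (fst p))\<^sup>2 \<Longrightarrow> cutoff c p = 0"
  by (simp add: cutoff_def flat_eq_0)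

text \<open>On the support of \<open>g\<close> the cut-off is positive, so \<open>g\<close> can be divided by it; \<open>\<rho>\<close> is the
  reciprocal of the cut-off, frozen outside a slightly larger disc to keep it continuous.\<close>

lemma cutoff_divides:
  assumes "\<And>z t. R \<le> cmod z \<Longrightarrow> g (z, t) = 0" "0 \<le> R"
  obtains \<rho> :: "complex \<Rightarrow> complex"
  where "continuous_on UNIV \<rho>" "\<And>p. g p = cutoff ((R + 1)\<^sup>2) p * (g p * \<rho> (fst p))"
proof
  define d where "d z = flat ((R + 1)\<^sup>2 - min ((cmod z)\<^sup>2) ((R + 1/2)\<^sup>2))" for z
  have "(R + 1/2)\<^sup>2 < (R + 1)\<^sup>2" using assms(2) by (intro power_strict_mono) auto
  then have d_pos: "d z > 0" for z
    unfolding d_def by (intro flat_pos) linarith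
  show "continuous_on UNIV (\<lambda>z. complex_of_real (1 / d z))"
    using d_pos unfolding d_def
    by (intro continuous_intros continuous_on_compose2[OF continuous_on_flat]) (auto simp: less_imp_neq[symmetric])
  show "g p = cutoff ((R + 1)\<^sup>2) p * (g p * complex_of_real (1 / d (fst p)))" for p
  proof (cases "g p = 0")
    case False
    then have "cmod (fst p) < R" using assms(1)[of "fst p" "snd p"] by (cases p) (auto simp: not_le[symmetric])
    then have "(cmod (fst p))\<^sup>2 < (R + 1/2)\<^sup>2" by (intro power_strict_mono) auto
    then have "cutoff ((R + 1)\<^sup>2) p = d (fst p)" by (simp add: cutoff_def d_def)
    then show ?thesis using d_pos[of "fst p"] by (simp add: field_simps)
  qed simp
qed

lemma trig_poly_uniform_approx:
  fixes \<tau> :: "hpt \<Rightarrow> complex"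
  assumes "continuous_on UNIV \<tau>" "\<And>z. \<tau> (z, pi) = \<tau> (z, 0)" "0 < \<eta>"
  shows "\<exists>H. trig_poly H \<and> (\<forall>p \<in> cball (0::complex) R \<times> {0..pi}. cmod (\<tau> p - H p) < \<eta>)"
proof -
  define S where "S = cball (0::complex) R \<times> {0..pi}"
  define \<Phi> where "\<Phi> p = (fst p, cis (2 * snd p))" for p :: hpt
  define \<tau>' where "\<tau>' q = \<tau> (fst q, SOME t. t \<in> {0..pi} \<and> cis (2 * t) = snd q)" for q
  have S: "compact S" unfolding S_def by (intro compact_Times) auto
  have \<Phi>: "continuous_on S \<Phi>" unfolding \<Phi>_def by (intro continuous_intros)
  have \<tau>'_\<Phi>: "\<tau>' (\<Phi> p) = \<tau> p" if "p \<in> S" for p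
  proof -
    obtain z t0 where p: "p = (z, t0)" by fastforce
    have t0: "t0 \<in> {0..pi}" using that p by (auto simp: S_def)
    define t1 where "t1 = (SOME t. t \<in> {0..pi} \<and> cis (2 * t) = cis (2 * t0))"
    have t1: "t1 \<in> {0..pi}" "cis (2 * t1) = cis (2 * t0)"
      using someI_ex[of "\<lambda>t. t \<in> {0..pi} \<and> cis (2 * t) = cis (2 * t0)"] t0 unfolding t1_def by blast+
    from cis_double_eq_cases[OF t0 t1(1) t1(2)[symmetric]] have "\<tau> (z, t1) = \<tau> (z, t0)"
      using assms(2) by auto
    then show ?thesis unfolding \<tau>'_def \<Phi>_def p t1_def by simp
  qed
  have \<tau>': "continuous_on (\<Phi> ` S) \<tau>'"
  proof (rule continuous_on_quotient[OF S \<Phi>])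
    show "continuous_on S (\<lambda>x. \<tau>' (\<Phi> x))"
      using continuous_on_subset[OF assms(1), of S]
      by (rule continuous_on_cong[THEN iffD1, rotated 2]) (auto simp: \<tau>'_\<Phi>)
  qed
  have "compact (\<Phi> ` S)" by (rule compact_continuous_image[OF \<Phi> S])
  then obtain h where h: "poly_zw h" "\<And>q. q \<in> \<Phi> ` S \<Longrightarrow> cmod (\<tau>' q - h q) < \<eta>"
    using poly_zw_uniform_approx[OF _ \<tau>' assms(3)] by blast
  show ?thesis
  proof (intro exI conjI ballI)
    show "trig_poly (\<lambda>p. h (fst p, cis (2 * snd p)))" by (rule trig_poly_poly_zw_cis[OF h(1)])
    fix p assume "p \<in> cball (0::complex) R \<times> {0..pi}"
    then have "p \<in> S" by (simp add: S_def)
    then show "cmod (\<tau> p - h (fst p, cis (2 * snd p))) < \<eta>"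
      using h(2)[of "\<Phi> p"] \<tau>'_\<Phi>[of p] unfolding \<Phi>_def by simp
  qed
qed

lemma exists_pos_sq_mult_less:
  fixes m e :: real
  assumes "0 \<le> m" "0 < e"
  shows "\<exists>\<eta>>0. \<eta>\<^sup>2 * m < e"
proof -
  define \<eta> where "\<eta> = sqrt (e / (m + 1))"
  have "0 < \<eta>" and "\<eta>\<^sup>2 = e / (m + 1)" using assms by (simp_all add: \<eta>_def)
  then have "\<eta>\<^sup>2 * m + \<eta>\<^sup>2 = e" and "0 < \<eta>\<^sup>2" using assms(1) by (simp_all add: field_simps)
  then have "\<eta>\<^sup>2 * m < e" by linarith
  with \<open>0 < \<eta>\<close> show ?thesis by blast
qed

lemma cutoff_trig_poly_approx:
  assumes "continuous_on UNIV g" "\<And>z. g (z, pi) = g (z, 0)" "\<And>z t. R \<le> cmod z \<Longrightarrow> g (z, t) = 0"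
    and "0 \<le> R" "0 < e"
  shows "\<exists>c H. trig_poly H \<and> L2sq (\<lambda>p. g p - cutoff c p * H p) < ennreal e"
proof -
  define c where "c = (R + 1)\<^sup>2"
  obtain \<rho> where \<rho>: "continuous_on UNIV \<rho>" "\<And>p. g p = cutoff c p * (g p * \<rho> (fst p))"
    unfolding c_def using cutoff_divides[of R g, OF assms(3,4)] by blast
  define m where "m = measure lborel (cball (0::complex) (R + 1) \<times> {0..<pi})"
  have "0 \<le> m" by (simp add: m_def)
  then obtain \<eta> where "0 < \<eta>" and \<eta>_m: "\<eta>\<^sup>2 * m < e"
    using exists_pos_sq_mult_less assms(5) by blast
  have cont: "continuous_on UNIV (\<lambda>p. g p * \<rho> (fst p))"
    by (intro continuous_intros assms(1) continuous_on_compose2[OF \<rho>(1)]) auto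
  have per: "g (z, pi) * \<rho> (fst (z, pi)) = g (z, 0) * \<rho> (fst (z, 0))" for z
    using assms(2) by simp
  obtain H where H: "trig_poly H"
    "\<forall>p \<in> cball 0 (R + 1) \<times> {0..pi}. cmod (g p * \<rho> (fst p) - H p) < \<eta>"
    using trig_poly_uniform_approx[of "\<lambda>p. g p * \<rho> (fst p)", OF cont per \<open>0 < \<eta>\<close>] by blast
  have "cmod (g p - cutoff c p * H p) \<le> (if cmod (fst p) \<le> R + 1 then \<eta> else 0)" if "p \<in> fdom" for p
  proof (cases "cmod (fst p) \<le> R + 1")
    case True
    then have "p \<in> cball 0 (R + 1) \<times> {0..pi}" using that by (cases p) (auto simp: fdom_def)
    have "cmod (g p - cutoff c p * H p) = cmod (cutoff c p) * cmod (g p * \<rho> (fst p) - H p)"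
      by (subst \<rho>(2)) (simp add: norm_mult[symmetric] algebra_simps)
    also have "\<dots> \<le> 1 * \<eta>"
      using bspec[OF H(2) \<open>p \<in> cball 0 (R + 1) \<times> {0..pi}\<close>] norm_cutoff_le_1
      by (intro mult_mono) (auto intro: less_imp_le)
    finally show ?thesis using True by simp
  next
    case False
    then have "g p = 0" using assms(3)[of "fst p" "snd p"] by simp
    moreover have "c \<le> (cmod (fst p))\<^sup>2" using False assms(4) unfolding c_def by (intro power_mono) auto
    ultimately show ?thesis using False by (simp add: cutoff_eq_0)
  qed
  then have "L2sq (\<lambda>p. g p - cutoff c p * H p)
      \<le> ennreal (\<eta>\<^sup>2) * emeasure lborel (cball (0::complex) (R + 1) \<times> {0..<pi})"
    by (intro L2sq_le_bounded_support) (use \<open>0 < \<eta>\<close> in auto)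
  also have "emeasure lborel (cball (0::complex) (R + 1) \<times> {0..<pi}) = ennreal m"
    unfolding m_def using emeasure_cball_strip_finite[of "R + 1"]
    by (intro emeasure_eq_ennreal_measure) (simp add: less_top)
  also have "ennreal (\<eta>\<^sup>2) * ennreal m = ennreal (\<eta>\<^sup>2 * m)"
    using \<open>0 \<le> m\<close> by (simp add: ennreal_mult)
  also have "\<dots> < ennreal e" using \<eta>_m assms(5) by (simp add: ennreal_lessI)
  finally show ?thesis using H(1) by blast
qed

lemma cutoff_trig_poly_dense:
  assumes "f \<in> borel_measurable lborel" "L2sq f < \<infinity>" "0 < e"
  shows "\<exists>c H. trig_poly H \<and> L2sq (\<lambda>p. f p - cutoff c p * H p) < ennreal e"
proof -
  have "0 < e / 4" using assms(3) by simp
  obtain g R where g: "continuous_on UNIV g" "\<forall>z. g (z, pi) = g (z, 0)" "\<forall>z t. R \<le> cmod z \<longrightarrow> g (z, t) = 0"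
    "L2sq (\<lambda>p. f p - g p) < ennreal (e / 4)"
    using continuous_approx[OF assms(1,2) \<open>0 < e / 4\<close>] by blast
  have supp: "g (z, t) = 0" if "max R 0 \<le> cmod z" for z t using g(3) that by simp
  obtain c H where H: "trig_poly H" "L2sq (\<lambda>p. g p - cutoff c p * H p) < ennreal (e / 4)"
    using cutoff_trig_poly_approx[OF g(1) g(2)[rule_format] supp max.cobounded2 \<open>0 < e / 4\<close>] by blast
  have "elementary (\<lambda>p. cutoff c p * H p)"
    by (intro elementary.mult elementary_cutoff trig_poly_elementary H(1))
  then have "L2sq (\<lambda>p. f p - cutoff c p * H p) < ennreal e"
    by (intro L2sq_triangle_less[OF assms(1) continuous_imp_measurable_lborel[OF g(1)] _ g(4) H(2)]
        elementary_measurable)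
  then show ?thesis using H(1) by blast
qed

lemma set_integral_cis_multiple:
  fixes k :: int
  assumes "k \<noteq> 0"
  shows "(LINT s:{0..pi}|lborel. cis (2 * of_int k * s)) = 0"
proof -
  define a where "a = 2 * real_of_int k"
  have "a \<noteq> 0" using assms by (simp add: a_def)
  define F where "F s = exp (\<i> * complex_of_real a * complex_of_real s) / (\<i> * complex_of_real a)" for s
  have "(F has_vector_derivative cis (a * x)) (at x within {0..pi})" for x
  proof -
    have "((\<lambda>w. exp (\<i> * complex_of_real a * w) / (\<i> * complex_of_real a)) has_field_derivative
          (exp (\<i> * complex_of_real a * complex_of_real x) * (\<i> * complex_of_real a) / (\<i> * complex_of_real a)))
          (at (complex_of_real x))"
      by (auto intro!: derivative_eq_intros)
    then have "(F has_vector_derivative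
          (exp (\<i> * complex_of_real a * complex_of_real x) * (\<i> * complex_of_real a) / (\<i> * complex_of_real a)))
          (at x within {0..pi})"
      unfolding F_def by (rule has_vector_derivative_real_field)
    moreover have "exp (\<i> * complex_of_real a * complex_of_real x) * (\<i> * complex_of_real a) / (\<i> * complex_of_real a)
        = cis (a * x)"
      using \<open>a \<noteq> 0\<close> by (simp add: cis_conv_exp mult.assoc)
    ultimately show ?thesis by simp
  qed
  then have "(LINT s:{0..pi}|lborel. cis (a * s)) = F pi - F 0"
    unfolding set_lebesgue_integral_def
    by (intro integral_FTC_atLeastAtMost continuous_intros) auto
  also have "exp (\<i> * complex_of_real a * complex_of_real pi) = cis (2 * pi * real_of_int k)"
    by (simp add: cis_conv_exp a_def mult_ac)
  then have "F pi - F 0 = 0"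
    using cis_multiple_2pi[of "of_int k"] by (simp add: F_def)
  finally show ?thesis by (simp add: a_def)
qed

lemma elementary_fibre_integrable:
  assumes "elementary g" shows "set_integrable lborel {0..pi} (\<lambda>s. g (z, s))"
proof -
  have "continuous_on UNIV (\<lambda>s::real. (z, s))" by (intro continuous_intros)
  then have "continuous_on UNIV (\<lambda>s. g (z, s))"
    using continuous_on_compose[of UNIV "\<lambda>s::real. (z, s)" g] elementary_continuous[OF assms]
    by (simp add: o_def continuous_on_subset)
  then show ?thesis
    by (rule borel_integrable_atLeastAtMost'[OF continuous_on_subset[OF _ subset_UNIV]])
qed

lemma mean_zero_trig_poly_fibre_integral:
  assumes "mean_zero_trig_poly f"
  shows "(LINT s:{0..pi}|lborel. w * f (z, s)) = 0"
  using assms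
proof induction
  case (mode v k)
  have "(\<lambda>s. w * (v (fst (z, s)) * cis (2 * of_int k * snd (z, s))))
      = (\<lambda>s. (w * v z) * cis (2 * of_int k * s))"
    by (simp add: mult.assoc)
  then have "(LINT s:{0..pi}|lborel. w * (v (fst (z, s)) * cis (2 * of_int k * snd (z, s))))
      = w * v z * (LINT s:{0..pi}|lborel. cis (2 * of_int k * s))"
    by (simp only: set_integral_mult_right)
  also have "\<dots> = 0" using set_integral_cis_multiple[OF mode(2)] by simp
  finally show ?case .
next
  case (add f g)
  have "set_integrable lborel {0..pi} (\<lambda>s. w * f (z, s))" "set_integrable lborel {0..pi} (\<lambda>s. w * g (z, s))"
    using elementary_fibre_integrable[OF elementary.mult[OF elementary.const mean_zero_trig_poly_elementary]]
      add(1,2) by blast+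
  then have "(LINT s:{0..pi}|lborel. w * (f (z, s) + g (z, s)))
      = (LINT s:{0..pi}|lborel. w * f (z, s)) + (LINT s:{0..pi}|lborel. w * g (z, s))"
    unfolding distrib_left by (rule set_integral_add(2))
  then show ?case using add.IH by (cases "w = 0") auto
qed simp

lemma fibre_avg_cutoff_trig_poly:
  assumes "elementary_fst u" "mean_zero_trig_poly f"
  shows "fibre_avg (\<lambda>p. cutoff c p * (u (fst p) + f p)) p = cutoff c p * u (fst p)"
proof -
  obtain z t where p: "p = (z, t)" by fastforce
  define w where "w = cutoff c (z, 0)"
  have "(LINT s:{0..pi}|lborel. cutoff c (z, s) * (u z + f (z, s)))
      = (LINT s:{0..pi}|lborel. w * u z + w * f (z, s))"
    by (simp add: w_def cutoff_def distrib_left)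
  also have "\<dots> = (LINT s:{0..pi}|lborel. w * u z) + (LINT s:{0..pi}|lborel. w * f (z, s))"
    using elementary_fibre_integrable[OF elementary.const]
      elementary_fibre_integrable[OF elementary.mult[OF elementary.const mean_zero_trig_poly_elementary[OF assms(2)]]]
    by (rule set_integral_add(2))
  also have "\<dots> = pi * (w * u z)"
    using mean_zero_trig_poly_fibre_integral[OF assms(2)]
    by (simp add: set_integral_const measure_def scaleR_conv_of_real)
  finally have I: "(LINT s:{0..pi}|lborel. cutoff c (z, s) * (u z + f (z, s))) = pi * (w * u z)" .
  show ?thesis unfolding fibre_avg_def p fst_conv I by (simp add: w_def cutoff_def)
qed

lemma L2C_subset_L2_closure:
  "L2C \<subseteq> L2_closure {\<lambda>p. cutoff c p * u (fst p) | c u. elementary_fst u}"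
  unfolding L2_closure_def
proof (intro subsetI CollectI allI impI)
  fix f and e :: real assume "f \<in> L2C" "0 < e"
  then have f: "f \<in> L2H" by (simp add: L2C_def)
  then have fm [measurable]: "f \<in> borel_measurable lborel" and "L2sq f < \<infinity>"
    by (simp_all add: L2H_iff_L2sq)
  then obtain c H where H: "trig_poly H" "L2sq (\<lambda>p. f p - cutoff c p * H p) < ennreal e"
    using cutoff_trig_poly_dense \<open>0 < e\<close> by blast
  obtain u f' where uf: "elementary_fst u" "mean_zero_trig_poly f'" "H = (\<lambda>p. u (fst p) + f' p)"
    using trig_poly_decompose[OF H(1)] by blast
  define F where "F p = cutoff c p * H p" for p
  have F: "elementary F" unfolding F_def
    by (intro elementary.mult elementary_cutoff trig_poly_elementary H(1))
  then have [measurable]: "F \<in> borel_measurable lborel" by (rule elementary_measurable)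
  have "fibre_integrable F" unfolding fibre_integrable_def
    by (intro AE_I2 elementary_fibre_integrable F)
  have PF: "fibre_avg F p = cutoff c p * u (fst p)" for p
    unfolding F_def uf(3) by (rule fibre_avg_cutoff_trig_poly[OF uf(1,2)])
  have "AE p in lborel. p \<in> fdom \<longrightarrow> f p - cutoff c p * u (fst p) = fibre_avg (\<lambda>p. f p - F p) p"
    using L2C_fibre_avg[OF \<open>f \<in> L2C\<close>] fibre_avg_diff[OF L2H_fibre_integrable[OF f] \<open>fibre_integrable F\<close>]
    by eventually_elim (simp add: PF)
  then have "L2sq (\<lambda>p. f p - cutoff c p * u (fst p)) = L2sq (fibre_avg (\<lambda>p. f p - F p))"
    by (rule L2sq_cong_AE)
  also have "\<dots> \<le> L2sq (\<lambda>p. f p - F p)" by (rule L2sq_fibre_avg_le) measurable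
  finally show "\<exists>g\<in>{\<lambda>p. cutoff c p * u (fst p) | c u. elementary_fst u}. L2sq (\<lambda>p. f p - g p) < ennreal e"
    using H(2) uf(1) unfolding F_def by (intro bexI[of _ "\<lambda>p. cutoff c p * u (fst p)"]) auto
qed

lemma L2zero_subset_L2_closure:
  "L2zero \<subseteq> L2_closure {\<lambda>p. cutoff c p * f' p | c f'. mean_zero_trig_poly f'}"
  unfolding L2_closure_def
proof (intro subsetI CollectI allI impI)
  fix f and e :: real assume "f \<in> L2zero" "0 < e"
  then have f: "f \<in> L2H" by (simp add: L2zero_def)
  then have fm [measurable]: "f \<in> borel_measurable lborel" and "L2sq f < \<infinity>"
    by (simp_all add: L2H_iff_L2sq)
  have "0 < e / 4" using \<open>0 < e\<close> by simp
  then obtain c H where H: "trig_poly H" "L2sq (\<lambda>p. f p - cutoff c p * H p) < ennreal (e / 4)"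
    using cutoff_trig_poly_dense[OF fm \<open>L2sq f < \<infinity>\<close>] by blast
  obtain u f' where uf: "elementary_fst u" "mean_zero_trig_poly f'" "H = (\<lambda>p. u (fst p) + f' p)"
    using trig_poly_decompose[OF H(1)] by blast
  define F where "F p = cutoff c p * H p" for p
  define G where "G p = cutoff c p * f' p" for p
  have F: "elementary F" unfolding F_def
    by (intro elementary.mult elementary_cutoff trig_poly_elementary H(1))
  then have Fm [measurable]: "F \<in> borel_measurable lborel" by (rule elementary_measurable)
  have Gm [measurable]: "G \<in> borel_measurable lborel" unfolding G_def
    by (intro elementary_measurable elementary.mult elementary_cutoff mean_zero_trig_poly_elementary uf(2))
  have "fibre_integrable F" unfolding fibre_integrable_def
    by (intro AE_I2 elementary_fibre_integrable F)
  have PF: "fibre_avg F p = F p - G p" for p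
    unfolding F_def G_def uf(3) fibre_avg_cutoff_trig_poly[OF uf(1,2)] by (simp add: algebra_simps)
  have "AE p in lborel. p \<in> fdom \<longrightarrow> F p - G p = fibre_avg (\<lambda>p. F p - f p) p"
    using L2zero_fibre_avg[OF \<open>f \<in> L2zero\<close>] fibre_avg_diff[OF \<open>fibre_integrable F\<close> L2H_fibre_integrable[OF f]]
    by eventually_elim (simp add: PF)
  then have "L2sq (\<lambda>p. F p - G p) = L2sq (fibre_avg (\<lambda>p. F p - f p))"
    by (rule L2sq_cong_AE)
  also have "\<dots> \<le> L2sq (\<lambda>p. F p - f p)" by (rule L2sq_fibre_avg_le) measurable
  also have "\<dots> = L2sq (\<lambda>p. f p - F p)" by (rule L2sq_diff_commute)
  also have fF: "\<dots> < ennreal (e / 4)" using H(2) by (simp add: F_def)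
  finally have "L2sq (\<lambda>p. f p - G p) < ennreal e"
    by (rule L2sq_triangle_less[OF fm Fm Gm fF])
  then show "\<exists>g\<in>{\<lambda>p. cutoff c p * f' p | c f'. mean_zero_trig_poly f'}. L2sq (\<lambda>p. f p - g p) < ennreal e"
    using uf(2) unfolding G_def by (intro bexI[of _ "\<lambda>p. cutoff c p * f' p"]) auto
qed

section \<open>Test functions and their X-ray transforms\<close>

lemma smooth_fun_continuous: "smooth_fun f \<Longrightarrow> continuous_on UNIV f"
  by (metis continuous_at_imp_continuous_on differentiable_imp_continuous_within smooth_fun.cases)

lemma Cc_inf_subset_L2H: "Cc_inf \<subseteq> L2H"
proof
  fix f assume "f \<in> Cc_inf"
  then obtain R where "smooth_fun f" "pi_periodic f" and R: "\<And>z t. R < cmod z \<Longrightarrow> f (z, t) = 0"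
    unfolding Cc_inf_def by blast
  then have f: "continuous_on UNIV f" by (simp add: smooth_fun_continuous)
  have "compact (cball (0::complex) R \<times> {0..pi})" by (intro compact_Times) auto
  then have "bounded (f ` (cball 0 R \<times> {0..pi}))"
    by (intro compact_imp_bounded compact_continuous_image continuous_on_subset[OF f]) auto
  then obtain M where M: "0 \<le> M" "\<And>p. p \<in> cball 0 R \<times> {0..pi} \<Longrightarrow> cmod (f p) \<le> M"
    unfolding bounded_iff by (metis imageI norm_ge_zero order_trans)
  have bound: "cmod (f p) \<le> (if cmod (fst p) \<le> R then M else 0)" if "p \<in> fdom" for p
    using that M(2)[of p] R[of "fst p" "snd p"] by (cases p) (auto simp: fdom_def)
  have "L2sq f \<le> ennreal (M\<^sup>2) * emeasure lborel (cball (0::complex) R \<times> {0..<pi})"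
    by (rule L2sq_le_bounded_support[OF bound M(1)])
  also have "\<dots> < \<infinity>"
    using emeasure_cball_strip_finite by (simp add: ennreal_mult_less_top)
  finally show "f \<in> L2H"
    unfolding L2H_iff_L2sq using continuous_imp_measurable_lborel[OF f] \<open>pi_periodic f\<close> by blast
qed

lemma cutoff_mult_in_Cc_inf:
  assumes "elementary F" "pi_periodic F"
  shows "(\<lambda>p. cutoff c p * F p) \<in> Cc_inf"
  unfolding Cc_inf_def mem_Collect_eq
proof (intro conjI exI allI impI)
  show "smooth_fun (\<lambda>p. cutoff c p * F p)"
    by (intro elementary_smooth_fun elementary.mult elementary_cutoff assms(1))
  show "pi_periodic (\<lambda>p. cutoff c p * F p)"
    using assms(2) by (simp add: pi_periodic_def cutoff_def)
  fix z t assume "sqrt \<bar>c\<bar> < cmod z"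
  then have "(sqrt \<bar>c\<bar>)\<^sup>2 < (cmod z)\<^sup>2" by (intro power_strict_mono) auto
  then show "cutoff c (z, t) * F (z, t) = 0" by (simp add: cutoff_eq_0)
qed

lemma cutoff_fst_in_Cc_inf: "elementary_fst u \<Longrightarrow> (\<lambda>p. cutoff c p * u (fst p)) \<in> Cc_inf"
  by (intro cutoff_mult_in_Cc_inf) (simp_all add: elementary_fst_def pi_periodic_def)

lemma cutoff_mean_zero_in_Cc_inf: "mean_zero_trig_poly f \<Longrightarrow> (\<lambda>p. cutoff c p * f p) \<in> Cc_inf"
  by (intro cutoff_mult_in_Cc_inf mean_zero_trig_poly_elementary)
     (simp_all add: pi_periodic_def mean_zero_trig_poly_periodic)

text \<open>Right translation by \<open>\<gamma>\<^sub>r(s)\<close> commutes with translation along the centre; this is the only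
  property of \<open>I\<^sub>r\<close> the argument needs.\<close>

lemma hmul_central_shift: "hmul (z, t) q = (fst (hmul (z, 0) q), snd (hmul (z, 0) q) + t)"
  by (simp add: hmul_def)

lemma xray_fst_invariant:
  assumes "\<And>p q. fst p = fst q \<Longrightarrow> F p = F q"
  shows "xray a b F (z, t) = xray a b F (z, 0)"
proof -
  have "F (hmul (z, t) q) = F (hmul (z, 0) q)" for q
    by (rule assms) (simp add: hmul_def)
  then show ?thesis unfolding xray_def by simp
qed

lemma xray_mode:
  assumes "\<And>p. F p = W (fst p) * cis (2 * of_int k * snd p)"
  shows "xray a b F (z, t) = cis (2 * of_int k * t) * xray a b F (z, 0)"
proof -
  have "F (hmul (z, t) q) = cis (2 * of_int k * t) * F (hmul (z, 0) q)" for q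
    unfolding hmul_central_shift[of z t] assms
    by (simp add: distrib_left cis_mult[symmetric] algebra_simps)
  then show ?thesis unfolding xray_def by (simp add: set_integral_mult_right)
qed

lemma xray_set_integrable:
  assumes "elementary F"
  shows "set_integrable lborel {0..L} (\<lambda>s. F (hmul p (gamma_r r s)))"
proof -
  have "continuous_on UNIV (\<lambda>s. hmul p (gamma_r r s))"
    unfolding hmul_def gamma_r_def divide_inverse by (intro continuous_intros)
  then have "continuous_on UNIV (\<lambda>s. F (hmul p (gamma_r r s)))"
    using continuous_on_compose[of UNIV "\<lambda>s. hmul p (gamma_r r s)" F] elementary_continuous[OF assms]
    by (simp add: o_def continuous_on_subset)
  then show ?thesis
    by (rule borel_integrable_atLeastAtMost'[OF continuous_on_subset[OF _ subset_UNIV]])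
qed

lemma xray_add:
  assumes "elementary F" "elementary G"
  shows "xray a b (\<lambda>p. F p + G p) p = xray a b F p + xray a b G p"
  unfolding xray_def
  by (rule set_integral_add(2)[OF xray_set_integrable[OF assms(1)] xray_set_integrable[OF assms(2)]])

lemma xray_cutoff_mean_zero:
  assumes "mean_zero_trig_poly f"
  shows "set_integrable lborel {0..pi} (\<lambda>t. xray a b (\<lambda>p. cutoff c p * f p) (z, t))
     \<and> (LINT t:{0..pi}|lborel. xray a b (\<lambda>p. cutoff c p * f p) (z, t)) = 0"
  using assms
proof induction
  case zero
  show ?case by (simp add: xray_def set_integrable_def)
next
  case (mode v k)
  define X where "X = xray a b (\<lambda>p. cutoff c p * (v (fst p) * cis (2 * of_int k * snd p))) (z, 0)"
  have "xray a b (\<lambda>p. cutoff c p * (v (fst p) * cis (2 * of_int k * snd p))) (z, t)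
      = cis (2 * of_int k * t) * X" for t
    unfolding X_def
    by (rule xray_mode[where W="\<lambda>z. cutoff c (z, 0) * v z"]) (simp add: cutoff_def)
  moreover have "set_integrable lborel {0..pi} (\<lambda>t. cis (2 * of_int k * t) * X)"
    by (rule borel_integrable_atLeastAtMost') (intro continuous_intros)
  moreover have "(LINT t:{0..pi}|lborel. cis (2 * of_int k * t) * X) = 0"
    using set_integral_cis_multiple[OF mode(2)]
    by (subst mult.commute) (simp add: set_integral_mult_right)
  ultimately show ?case by simp
next
  case (add f g)
  have "elementary (\<lambda>p. cutoff c p * f p)" "elementary (\<lambda>p. cutoff c p * g p)"
    using add(1,2) by (blast intro: elementary.mult elementary_cutoff mean_zero_trig_poly_elementary)+
  then have "xray a b (\<lambda>p. cutoff c p * (f p + g p)) (z, t)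
       = xray a b (\<lambda>p. cutoff c p * f p) (z, t) + xray a b (\<lambda>p. cutoff c p * g p) (z, t)" for t
    unfolding distrib_left by (rule xray_add)
  then show ?case
    using set_integral_add[OF add.IH(1)[THEN conjunct1] add.IH(2)[THEN conjunct1]]
      add.IH(1)[THEN conjunct2] add.IH(2)[THEN conjunct2]
    by simp
qed

lemma bounded_ext_xray_cutoff_fst:
  assumes "bounded_ext_xray a b T" "elementary_fst u"
  shows "T (\<lambda>p. cutoff c p * u (fst p)) \<in> L2C"
proof -
  define G where "G = (\<lambda>p. cutoff c p * u (fst p))"
  have "G \<in> Cc_inf" unfolding G_def by (rule cutoff_fst_in_Cc_inf[OF assms(2)])
  then have "T G \<in> L2H" and TG: "AE p in lborel. p \<in> fdom \<longrightarrow> T G p = xray a b G p"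
    using assms(1) Cc_inf_subset_L2H unfolding bounded_ext_xray_def ae_eq_def by auto
  have "xray a b G (fst p, snd p) = xray a b G (fst p, 0)" for p
    by (rule xray_fst_invariant) (simp add: G_def cutoff_def)
  then have "ae_eq (T G) (\<lambda>p. xray a b G (fst p, 0))"
    using TG unfolding ae_eq_def by (auto elim!: eventually_mono)
  then have "T G \<in> L2C"
    using \<open>T G \<in> L2H\<close> unfolding L2C_def by (auto intro!: exI[of _ "\<lambda>z. xray a b G (z, 0)"])
  then show ?thesis unfolding G_def .
qed

lemma bounded_ext_xray_cutoff_mean_zero:
  assumes "bounded_ext_xray a b T" "mean_zero_trig_poly f"
  shows "T (\<lambda>p. cutoff c p * f p) \<in> L2zero"
proof -
  define G where "G = (\<lambda>p. cutoff c p * f p)"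
  have "G \<in> Cc_inf" unfolding G_def by (rule cutoff_mean_zero_in_Cc_inf[OF assms(2)])
  then have "T G \<in> L2H" and TG: "AE p in lborel. p \<in> fdom \<longrightarrow> T G p = xray a b G p"
    using assms(1) Cc_inf_subset_L2H unfolding bounded_ext_xray_def ae_eq_def by auto
  have X: "set_integrable lborel {0..pi} (\<lambda>t. xray a b G (z, t))"
    "(LINT t:{0..pi}|lborel. xray a b G (z, t)) = 0" for z
    unfolding G_def using xray_cutoff_mean_zero[OF assms(2)] by blast+
  have "AE z in lborel. (LINT t:{0..pi}|lborel. T G (z, t)) = (LINT t:{0..pi}|lborel. xray a b G (z, t))"
  proof (rule fibre_integral_cong_AE[OF fibre_measurable _ TG])
    show "T G \<in> borel_measurable lborel" using \<open>T G \<in> L2H\<close> by (simp add: L2H_iff_L2sq)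
    show "(\<lambda>t. indicator {0..pi} t *\<^sub>R xray a b G (z, t)) \<in> borel_measurable lborel" for z
      using X(1) unfolding set_integrable_def by auto
  qed
  then have "T G \<in> L2zero"
    using \<open>T G \<in> L2H\<close> X(2) unfolding L2zero_def by auto
  then show ?thesis unfolding G_def .
qed

theorem mainTheorem1:
  fixes a b :: nat and T :: "(hpt \<Rightarrow> complex) \<Rightarrow> (hpt \<Rightarrow> complex)"
  assumes "0 < a" and "0 < b" and "coprime a b"
    and "bounded_ext_xray a b T"
  shows "(\<forall>f\<in>L2C. T f \<in> L2C) \<and> (\<forall>f\<in>L2zero. T f \<in> L2zero)"
proof -
  obtain C where "0 \<le> C" and lip: "\<And>f g. f \<in> L2H \<Longrightarrow> g \<in> L2H \<Longrightarrow>
      L2sq (\<lambda>p. T f p - T g p) \<le> ennreal C * L2sq (\<lambda>p. f p - g p)"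
    using bounded_ext_xray_L2sq_lipschitz[OF assms(4)] by blast
  have TL: "\<And>f. f \<in> L2H \<Longrightarrow> T f \<in> L2H" using assms(4) by (simp add: bounded_ext_xray_def)
  define D\<^sub>C where "D\<^sub>C = {\<lambda>p. cutoff c p * u (fst p) | c u. elementary_fst u}"
  define D\<^sub>0 where "D\<^sub>0 = {\<lambda>p. cutoff c p * f p | c f. mean_zero_trig_poly f}"
  have D: "D\<^sub>C \<subseteq> L2H" "D\<^sub>0 \<subseteq> L2H"
    using cutoff_fst_in_Cc_inf cutoff_mean_zero_in_Cc_inf Cc_inf_subset_L2H
    unfolding D\<^sub>C_def D\<^sub>0_def by blast+
  have TD: "T ` D\<^sub>C \<subseteq> L2C" "T ` D\<^sub>0 \<subseteq> L2zero"
    using bounded_ext_xray_cutoff_fst[OF assms(4)] bounded_ext_xray_cutoff_mean_zero[OF assms(4)]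
    unfolding D\<^sub>C_def D\<^sub>0_def by blast+
  show ?thesis
  proof (intro conjI ballI)
    fix f assume "f \<in> L2C"
    then have "f \<in> L2H" "f \<in> L2_closure D\<^sub>C"
      using L2C_subset_L2_closure unfolding L2C_def D\<^sub>C_def by blast+
    then have "T f \<in> L2_closure (T ` D\<^sub>C)" by (intro L2_closure_image[OF lip \<open>0 \<le> C\<close> D(1)])
    then have "T f \<in> L2_closure L2C" using L2_closure_mono[OF TD(1)] by blast
    then show "T f \<in> L2C" using L2C_closed TL \<open>f \<in> L2H\<close> by blast
  next
    fix f assume "f \<in> L2zero"
    then have "f \<in> L2H" "f \<in> L2_closure D\<^sub>0"
      using L2zero_subset_L2_closure unfolding L2zero_def D\<^sub>0_def by blast+
    then have "T f \<in> L2_closure (T ` D\<^sub>0)" by (intro L2_closure_image[OF lip \<open>0 \<le> C\<close> D(2)])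
    then have "T f \<in> L2_closure L2zero" using L2_closure_mono[OF TD(2)] by blast
    then show "T f \<in> L2zero" using L2zero_closed TL \<open>f \<in> L2H\<close> by blast
  qed
qed

end
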